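(* Let $D\subset\mathbb{R}^n$ be a convex domain and $p\in\partial D$. If $p$ is a strictly convex boundary point of $D$, then $\lim_{x\to p,\,x\in D} s_D(x)=1$.
   Context: A projective map of $\mathbb{R}^n\subset\mathbb{P}\mathbb{R}^n$ is a (linear-fractional) map induced by a linear map of $\mathbb{R}^{n+1}$ acting on homogeneous coordinates, where $\mathbb{R}^n$ is embedded as the points $(1:x_1:\dots:x_n)$. For a domain $D\subset\mathbb{R}^n$ and $z\in D$, the (projective) squeezing function is $s_D(z)=\sup\{r>0:\ \exists$ a projective map $\Phi$ with $\Phi(z)=0$, $\Phi(D)\subset B(0,1)$ and $B(0,r)\subset\Phi(D)\}$ (open Euclidean balls), with $s_D(z)=0$ if no such $\Phi$ exists. A point $p\in\partial D$ is strictly convex if $\partial D$ is $\mathcal{C}^2$-smooth in a neighborhood of $p$ and the restriction to the tangent hyperplane at $p$ of the Hessian of a (local) defining function of $D$ is positive definite. *)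

theory Defs
  imports "HOL-Analysis.Analysis"
begin

text \<open>R^n is modelled by a Euclidean space 'a; R^(n+1) (homogeneous coordinates)
  by real \<times> 'a, a point x of R^n corresponding to (1 : x).
  A projective map is induced by an invertible linear map f of real \<times> 'a.\<close>

definition proj_lin :: "(real \<times> 'a::euclidean_space \<Rightarrow> real \<times> 'a) \<Rightarrow> bool" where
  "proj_lin f \<longleftrightarrow> linear f \<and> bij f"

definition proj_map :: "(real \<times> 'a::euclidean_space \<Rightarrow> real \<times> 'a) \<Rightarrow> 'a \<Rightarrow> 'a" where
  "proj_map f x = inverse (fst (f (1, x))) *\<^sub>R snd (f (1, x))"

text \<open>f induces a map defined on D with values in R^n: no point of D is sent to the
  hyperplane at infinity.\<close>
definition proj_defined_on :: "(real \<times> 'a::euclidean_space \<Rightarrow> real \<times> 'a) \<Rightarrow> 'a set \<Rightarrow> bool" where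
  "proj_defined_on f D \<longleftrightarrow> (\<forall>x\<in>D. fst (f (1, x)) \<noteq> 0)"

definition squeeze_radii :: "'a::euclidean_space set \<Rightarrow> 'a \<Rightarrow> real set" where
  "squeeze_radii D z = {r. r > 0 \<and> (\<exists>f. proj_lin f \<and> proj_defined_on f D \<and>
      proj_map f z = 0 \<and> proj_map f ` D \<subseteq> ball 0 1 \<and> ball 0 r \<subseteq> proj_map f ` D)}"

definition squeezing :: "'a::euclidean_space set \<Rightarrow> 'a \<Rightarrow> real" where
  "squeezing D z = (if squeeze_radii D z = {} then 0 else Sup (squeeze_radii D z))"

definition strictly_convex_point :: "'a::euclidean_space set \<Rightarrow> 'a \<Rightarrow> bool" where
  "strictly_convex_point D p \<longleftrightarrow>
    (\<exists>U (\<rho>::'a \<Rightarrow> real) (g::'a \<Rightarrow> 'a) (H::'a \<Rightarrow> 'a \<Rightarrow>\<^sub>L 'a).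
       open U \<and> p \<in> U \<and>
       (\<forall>x\<in>U. (\<rho> has_derivative (\<lambda>v. g x \<bullet> v)) (at x)) \<and>
       (\<forall>x\<in>U. (g has_derivative blinfun_apply (H x)) (at x)) \<and>
       continuous_on U H \<and>
       (\<forall>x\<in>U. g x \<noteq> 0) \<and>
       D \<inter> U = {x\<in>U. \<rho> x < 0} \<and>
       (\<forall>v. v \<noteq> 0 \<and> g p \<bullet> v = 0 \<longrightarrow> v \<bullet> blinfun_apply (H p) v > 0))"

end

theory Submission
  imports Defs
begin

lemma quadratic_form_factor_on_subspace:
  fixes S :: "'a::euclidean_space \<Rightarrow> 'a"
  assumes S: "linear S" and pos: "\<And>x. x \<noteq> 0 \<Longrightarrow> x \<bullet> S x > 0"
    and "subspace V"
  shows "\<exists>R::'a \<Rightarrow> 'a. linear R \<and> (\<forall>x\<in>V. (norm (R x))\<^sup>2 = x \<bullet> S x)"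
  using \<open>subspace V\<close>
proof (induction "dim V" arbitrary: V rule: less_induct)
  case less
  show ?case
  proof (cases "V = {0}")
    case True
    then show ?thesis by (intro exI[of _ "\<lambda>_. 0"]) (auto simp: linear_zero)
  next
    case False
    with less.prems obtain v where v: "v \<in> V" "v \<noteq> 0"
      using subspace_0 by blast
    \<comment> \<open>S need not be symmetric: only its symmetric part B enters the quadratic form\<close>
    define B where "B x y = (x \<bullet> S y + y \<bullet> S x) / 2" for x y
    have B_add: "B (x + y) z = B x z + B y z" for x y z
      by (simp add: B_def linear_add[OF S] inner_add_left inner_add_right add_divide_distrib)
    have B_scale: "B (c *\<^sub>R x) z = c * B x z" for c x z
      by (simp add: B_def linear_scale[OF S] algebra_simps add_divide_distrib)
    have B_diff: "B (x - y) z = B x z - B y z" for x y z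
      by (simp add: B_def linear_diff[OF S] inner_diff_left inner_diff_right field_simps)
    have B_comm: "B x y = B y x" for x y
      by (simp add: B_def)
    have B_diff_right: "B z (x - y) = B z x - B z y" for x y z
      using B_diff B_comm by metis
    have B_scale_right: "B z (c *\<^sub>R x) = c * B z x" for c x z
      using B_scale B_comm by metis
    have B_zero: "B 0 z = 0" for z
      using B_diff[of 0 0] by simp
    define v0 where "v0 = (1 / sqrt (B v v)) *\<^sub>R v"
    have "B v v > 0" using pos v by (simp add: B_def)
    then have Bv0: "B v0 v0 = 1"
      by (simp add: v0_def B_def linear_scale[OF S] algebra_simps)
    have v0V: "v0 \<in> V" using v less.prems by (simp add: v0_def subspace_scale)
    define V' where "V' = {x\<in>V. B x v0 = 0}"
    have "subspace V'"
      using less.prems by (auto simp: V'_def subspace_def B_add B_scale B_zero)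
    moreover have "V' \<subset> V" using Bv0 v0V unfolding V'_def by force
    then have dim_V': "dim V' < dim V"
      using \<open>subspace V'\<close> less.prems by (metis dim_psubset span_eq_iff)
    ultimately obtain R' :: "'a \<Rightarrow> 'a" where R': "linear R'" "\<And>x. x \<in> V' \<Longrightarrow> (norm (R' x))\<^sup>2 = x \<bullet> S x"
      using less.hyps by blast
    have "dim (R' ` V') < DIM('a)"
      using dim_image_le[OF R'(1), of V'] dim_V' dim_subset_UNIV[of V] by linarith
    then obtain e0 where e0: "e0 \<noteq> 0" "\<And>y. y \<in> span (R' ` V') \<Longrightarrow> orthogonal e0 y"
      using orthogonal_to_subspace_exists by blast
    define e where "e = e0 /\<^sub>R norm e0"
    have e: "norm e = 1" "\<And>x. x \<in> V' \<Longrightarrow> orthogonal (R' x) e"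
      using e0 by (auto simp: e_def orthogonal_def span_base inner_commute[of e0])
    define R where "R x = R' (x - B x v0 *\<^sub>R v0) + B x v0 *\<^sub>R e" for x
    have "linear R"
      unfolding R_def using R'(1)
      by (intro linearI) (simp_all add: B_add B_scale linear_add linear_diff linear_scale algebra_simps)
    moreover have "(norm (R x))\<^sup>2 = x \<bullet> S x" if "x \<in> V" for x
    proof -
      define x' where "x' = x - B x v0 *\<^sub>R v0"
      have "x' \<in> V'"
        using that v0V less.prems Bv0 by (simp add: V'_def x'_def subspace_diff subspace_scale B_diff B_scale)
      have "(norm (R x))\<^sup>2 = (norm (R' x'))\<^sup>2 + (B x v0)\<^sup>2"
        using norm_add_Pythagorean[OF orthogonal_clauses(2)[OF e(2)[OF \<open>x' \<in> V'\<close>]], of "B x v0"] e(1)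
        by (simp add: R_def x'_def power_mult_distrib)
      also have "\<dots> = B x' x' + (B x v0)\<^sup>2"
        using R'(2)[OF \<open>x' \<in> V'\<close>] by (simp add: B_def)
      also have "B x' x' = B x x - (B x v0)\<^sup>2"
        using Bv0 B_comm[of v0 x]
        by (simp add: x'_def B_diff B_scale B_diff_right B_scale_right power2_eq_square)
      finally show ?thesis by (simp add: B_def)
    qed
    ultimately show ?thesis by blast
  qed
qed

lemma quadratic_form_factor:
  fixes S :: "'a::euclidean_space \<Rightarrow> 'a"
  assumes "linear S" and "\<And>x. x \<noteq> 0 \<Longrightarrow> x \<bullet> S x > 0"
  obtains R :: "'a \<Rightarrow> 'a" where "linear R" "\<And>x. (norm (R x))\<^sup>2 = x \<bullet> S x"
  using quadratic_form_factor_on_subspace[OF assms subspace_UNIV] by blast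

lemma hyperplane_form_factor:
  fixes nu :: "'a::euclidean_space" and A :: "'a \<Rightarrow> 'a"
  assumes nu: "norm nu = 1" and A: "linear A"
    and pos: "\<And>w. w \<noteq> 0 \<Longrightarrow> w \<bullet> nu = 0 \<Longrightarrow> w \<bullet> A w > 0"
  obtains R :: "'a \<Rightarrow> 'a" where "linear R" "inj R" "norm (R nu) = 1"
    "\<And>w. w \<bullet> nu = 0 \<Longrightarrow> R w \<bullet> R nu = 0"
    "\<And>w. w \<bullet> nu = 0 \<Longrightarrow> (norm (R w))\<^sup>2 = w \<bullet> A w"
proof -
  have nunu: "nu \<bullet> nu = 1" using nu by (simp add: norm_eq_1)
  define P where "P x = x - (nu \<bullet> x) *\<^sub>R nu" for x
  have P: "linear P" unfolding P_def by (intro linearI) (simp_all add: inner_add_right algebra_simps)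
  have P_nu: "P x \<bullet> nu = 0" for x by (simp add: P_def inner_diff_left nunu inner_commute[of x nu])
  have P_self_adjoint: "x \<bullet> P y = P x \<bullet> y" for x y
    by (simp add: P_def inner_diff_left inner_diff_right inner_commute)
  define S where "S x = P (A (P x)) + (nu \<bullet> x) *\<^sub>R nu" for x
  have S: "linear S"
    unfolding S_def using P A
    by (intro linearI) (simp_all add: linear_add linear_scale inner_add_right algebra_simps)
  have S_form: "x \<bullet> S x = P x \<bullet> A (P x) + (nu \<bullet> x)\<^sup>2" for x
    by (simp add: S_def inner_add_right P_self_adjoint power2_eq_square inner_commute)
  have S_pos: "x \<bullet> S x > 0" if "x \<noteq> 0" for x
  proof (cases "P x = 0")
    case True
    then have "nu \<bullet> x \<noteq> 0" using that by (metis P_def eq_iff_diff_eq_0 scale_zero_left)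
    then show ?thesis using True by (simp add: S_form linear_0[OF A])
  next
    case False
    then show ?thesis using pos[OF False P_nu] by (simp add: S_form add_pos_nonneg)
  qed
  obtain R :: "'a \<Rightarrow> 'a" where R: "linear R" "\<And>x. (norm (R x))\<^sup>2 = x \<bullet> S x"
    using quadratic_form_factor[OF S S_pos] by blast
  have S_hyperplane: "S w = P (A w)" "P w = w" if "w \<bullet> nu = 0" for w
    using that by (simp_all add: S_def P_def inner_commute)
  have S_nu: "S nu = nu" by (simp add: S_def P_def nunu linear_0[OF A])
  show ?thesis
  proof
    show "linear R" by (fact R(1))
    show "inj R"
      unfolding linear_inj_iff_eq_0[OF R(1)] by (metis R(2) S_pos norm_zero power_zero_numeral less_irrefl)
    show "norm (R nu) = 1" using R(2)[of nu] S_nu nunu norm_ge_zero[of "R nu"] by (simp add: power2_eq_1_iff)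
    fix w assume w: "w \<bullet> nu = 0"
    then show R_w: "(norm (R w))\<^sup>2 = w \<bullet> A w"
      by (simp add: R(2) S_hyperplane P_self_adjoint)
    have "(norm (R (w + nu)))\<^sup>2 = (norm (R w))\<^sup>2 + 2 * (R w \<bullet> R nu) + (norm (R nu))\<^sup>2"
      by (simp add: linear_add[OF R(1)] power2_norm_eq_inner inner_add_left inner_add_right inner_commute)
    moreover have "(norm (R (w + nu)))\<^sup>2 = w \<bullet> A w + 1"
      using w S_hyperplane[OF w] P_nu[of "A w"] S_nu nunu P_self_adjoint[of w "A w"]
      by (simp add: R(2) linear_add[OF S] inner_add_left inner_add_right inner_commute)
    ultimately show "R w \<bullet> R nu = 0"
      using R_w R(2)[of nu] S_nu nunu by simp
  qed
qed

definition quadric_chart :: "'a::euclidean_space \<Rightarrow> 'a \<Rightarrow> ('a \<Rightarrow> 'a) \<Rightarrow> real \<Rightarrow> real \<Rightarrow> real \<times> 'a \<Rightarrow> real \<times> 'a"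
  where "quadric_chart q nu R d eps = (\<lambda>(t, x).
     (nu \<bullet> (x - t *\<^sub>R q) / d * (1 + 2 * eps) + t,
      (nu \<bullet> (x - t *\<^sub>R q) / d - t) *\<^sub>R R nu
        + (2 * sqrt (1 + eps) / sqrt d) *\<^sub>R R ((x - t *\<^sub>R q) - (nu \<bullet> (x - t *\<^sub>R q)) *\<^sub>R nu)))"

lemma quadric_chart_inner_estimate:
  fixes X Y2 r eps th :: real
  assumes "eps \<ge> 0" "th \<ge> 0" "\<bar>X\<bar> \<le> 1" "X\<^sup>2 + Y2 < r\<^sup>2"
    and "(1 + th) * (1 + eps) * r\<^sup>2 \<le> 1 - 8 * eps"
  shows "(1 + th) * (1 + eps) * Y2 + eps * (1 + X)\<^sup>2 < (1 + X) * (1 - X * (1 + 2 * eps))"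
proof -
  have k: "(1 + th) * (1 + eps) \<ge> 1"
    using assms(1,2) by (simp add: algebra_simps add_nonneg_nonneg)
  have "(1 + th) * (1 + eps) * Y2 < (1 + th) * (1 + eps) * (r\<^sup>2 - X\<^sup>2)"
    using assms(4) k by (intro mult_strict_left_mono) auto
  also have "\<dots> \<le> 1 - 8 * eps - X\<^sup>2"
    using assms(5) mult_right_mono[OF k, of "X\<^sup>2"] by (simp add: right_diff_distrib)
  also have "\<dots> \<le> (1 + X) * (1 - X * (1 + 2 * eps)) - eps * (1 + X)\<^sup>2"
  proof -
    have "X\<^sup>2 \<le> 1" using assms(3) by (simp add: abs_square_le_1)
    then have "eps * X\<^sup>2 \<le> eps" using assms(1) mult_left_mono[of "X\<^sup>2" 1 eps] by simp
    moreover have "\<bar>eps * X\<bar> \<le> eps" using assms(1,3) mult_left_mono[of "\<bar>X\<bar>" 1 eps] by (simp add: abs_mult)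
    ultimately show ?thesis by (simp add: power2_eq_square algebra_simps abs_le_iff)
  qed
  finally show ?thesis by simp
qed

definition normal_height :: "'a::real_inner \<Rightarrow> 'a \<Rightarrow> 'a \<Rightarrow> real"
  where "normal_height q nu x = nu \<bullet> (x - q)"

definition tangential_part :: "'a::real_inner \<Rightarrow> 'a \<Rightarrow> 'a \<Rightarrow> 'a"
  where "tangential_part q nu x = (x - q) - normal_height q nu x *\<^sub>R nu"

lemma normal_decomposition:
  fixes q nu x :: "'a::real_inner"
  assumes "norm nu = 1"
  shows "x = q + normal_height q nu x *\<^sub>R nu + tangential_part q nu x"
    and "tangential_part q nu x \<bullet> nu = 0"
    and "(norm (x - q))\<^sup>2 = (normal_height q nu x)\<^sup>2 + (norm (tangential_part q nu x))\<^sup>2"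
proof -
  have nunu: "nu \<bullet> nu = 1" using assms by (simp add: norm_eq_1)
  show "x = q + normal_height q nu x *\<^sub>R nu + tangential_part q nu x"
    by (simp add: tangential_part_def)
  show orth: "tangential_part q nu x \<bullet> nu = 0"
    by (simp add: tangential_part_def normal_height_def inner_diff_left inner_diff_right nunu inner_commute[of x nu] inner_commute[of q nu])
  have "x - q = normal_height q nu x *\<^sub>R nu + tangential_part q nu x"
    by (simp add: tangential_part_def)
  then show "(norm (x - q))\<^sup>2 = (normal_height q nu x)\<^sup>2 + (norm (tangential_part q nu x))\<^sup>2"
    using norm_add_Pythagorean[of "normal_height q nu x *\<^sub>R nu" "tangential_part q nu x"] orth assms
    by (simp add: orthogonal_def inner_commute power_mult_distrib)
qed

locale quadric_frame =
  fixes q nu :: "'a::euclidean_space" and R :: "'a \<Rightarrow> 'a" and d eps :: real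
  assumes nu: "norm nu = 1" and R: "linear R" "inj R" "norm (R nu) = 1"
    and R_orth: "\<And>w. w \<bullet> nu = 0 \<Longrightarrow> R w \<bullet> R nu = 0"
    and d: "d > 0" and eps: "eps \<ge> 0"
begin

abbreviation "f \<equiv> quadric_chart q nu R d eps"
definition c :: real where "c = 2 * sqrt (1 + eps) / sqrt d"

lemma nunu: "nu \<bullet> nu = 1"
  using nu by (simp add: norm_eq_1)

lemma nu_orth_component: "(h - (nu \<bullet> h) *\<^sub>R nu) \<bullet> nu = 0"
  by (simp add: inner_diff_left nunu inner_commute[of h nu])

lemma c_pos: "c > 0"
  using d eps by (simp add: c_def)

lemma c_sq: "c\<^sup>2 = 4 * (1 + eps) / d"
  using d eps by (simp add: c_def power_divide power_mult_distrib)

lemma proj_lin_quadric_chart: "proj_lin f"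
proof -
  have lin: "linear f"
    unfolding quadric_chart_def using R(1)
    by (intro linearI)
      (auto simp: linear_add linear_diff linear_scale inner_add_right inner_diff_right algebra_simps
        add_divide_distrib diff_divide_distrib)
  have "v = 0" if "f v = 0" for v
  proof -
    obtain t x where v: "v = (t, x)" by fastforce
    define h where "h = x - t *\<^sub>R q"
    define w where "w = h - (nu \<bullet> h) *\<^sub>R nu"
    have w_nu: "w \<bullet> nu = 0" by (simp add: w_def nu_orth_component)
    have 1: "nu \<bullet> h / d * (1 + 2 * eps) + t = 0"
      and 2: "(nu \<bullet> h / d - t) *\<^sub>R R nu + c *\<^sub>R R w = 0"
      using that unfolding v quadric_chart_def h_def w_def c_def by (simp_all add: zero_prod_def)
    have "0 = ((nu \<bullet> h / d - t) *\<^sub>R R nu + c *\<^sub>R R w) \<bullet> R nu" by (simp add: 2)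
    also have "\<dots> = nu \<bullet> h / d - t"
      using R_orth[OF w_nu] R(3) by (simp add: inner_add_left norm_eq_1[symmetric])
    finally have "nu \<bullet> h / d = t" by simp
    with 1 have "t * (2 + 2 * eps) = 0" by (simp add: algebra_simps)
    with eps have "t = 0" by simp
    with \<open>nu \<bullet> h / d = t\<close> d have "nu \<bullet> h = 0" by simp
    with \<open>t = 0\<close> 2 c_pos have "R w = 0" by simp
    with \<open>nu \<bullet> h = 0\<close> have "h = 0"
      using R(1,2) by (simp add: w_def linear_inj_iff_eq_0)
    then show "v = 0" using \<open>t = 0\<close> by (simp add: v h_def zero_prod_def)
  qed
  then have "inj f" using lin by (simp add: linear_inj_iff_eq_0)
  then show ?thesis
    using lin linear_inj_imp_surj[OF lin] by (simp add: proj_lin_def bij_def)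
qed

abbreviation "height \<equiv> normal_height q nu"
abbreviation "tangential \<equiv> tangential_part q nu"

lemma tangential_orth: "tangential x \<bullet> nu = 0"
  by (simp add: tangential_part_def normal_height_def nu_orth_component)

lemma height_tangential_point:
  assumes "w \<bullet> nu = 0"
  shows "height (q + s *\<^sub>R nu + w) = s" "tangential (q + s *\<^sub>R nu + w) = w"
  using assms nunu by (simp_all add: normal_height_def tangential_part_def inner_add_right inner_commute)

lemma proj_map_quadric_chart:
  "proj_map f x = inverse (height x / d * (1 + 2 * eps) + 1) *\<^sub>R
     ((height x / d - 1) *\<^sub>R R nu + c *\<^sub>R R (tangential x))"
  by (simp add: proj_map_def quadric_chart_def normal_height_def tangential_part_def c_def)

lemma norm_chart_sq:
  assumes "w \<bullet> nu = 0"
  shows "(norm (a *\<^sub>R R nu + b *\<^sub>R R w))\<^sup>2 = a\<^sup>2 + b\<^sup>2 * (norm (R w))\<^sup>2"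
proof -
  have "orthogonal (a *\<^sub>R R nu) (b *\<^sub>R R w)"
    using R_orth[OF assms] by (simp add: orthogonal_def inner_commute)
  then show ?thesis
    using R(3) by (simp add: norm_add_Pythagorean power_mult_distrib)
qed

text \<open>The chart maps the outer quadric exactly onto the unit ball: with \<open>\<sigma> = height x / d\<close>,
  \<open>c\<^sup>2 (height x + eps/d height\<^sup>2 x) = (\<sigma> (1 + 2 eps) + 1)\<^sup>2 - (\<sigma> - 1)\<^sup>2\<close>.\<close>
lemma norm_proj_map_quadric_chart_less_1:
  assumes "height x > 0" "(norm (R (tangential x)))\<^sup>2 < height x + (eps / d) * (height x)\<^sup>2"
  shows "norm (proj_map f x) < 1"
proof -
  define \<sigma> where "\<sigma> = height x / d"
  define T where "T = \<sigma> * (1 + 2 * eps) + 1"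
  have "\<sigma> > 0" using assms(1) d by (simp add: \<sigma>_def)
  then have "T > 0" using eps by (simp add: T_def add_nonneg_pos)
  have "c\<^sup>2 * (norm (R (tangential x)))\<^sup>2 < c\<^sup>2 * (height x + (eps / d) * (height x)\<^sup>2)"
    using assms(2) c_pos by (intro mult_strict_left_mono) auto
  also have "\<dots> = 4 * (1 + eps) / d * (height x + (eps / d) * (height x)\<^sup>2)"
    by (simp only: c_sq)
  also have "\<dots> = T\<^sup>2 - (\<sigma> - 1)\<^sup>2"
    using d by (simp add: T_def \<sigma>_def field_simps power2_eq_square)
  finally have "(norm ((\<sigma> - 1) *\<^sub>R R nu + c *\<^sub>R R (tangential x)))\<^sup>2 < T\<^sup>2"
    by (simp add: norm_chart_sq[OF tangential_orth])
  then have "norm ((\<sigma> - 1) *\<^sub>R R nu + c *\<^sub>R R (tangential x)) < T"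
    using \<open>T > 0\<close> by (simp add: power_less_imp_less_base)
  then show ?thesis
    using \<open>T > 0\<close> by (simp add: proj_map_quadric_chart \<sigma>_def[symmetric] T_def[symmetric] divide_simps)
qed

lemma R_onto_orth:
  assumes "y \<bullet> R nu = 0"
  obtains w where "w \<bullet> nu = 0" "R w = y"
proof -
  obtain w0 where w0: "R w0 = y"
    using linear_inj_imp_surj[OF R(1,2)] by (metis surjD)
  define w where "w = w0 - (nu \<bullet> w0) *\<^sub>R nu"
  have "w \<bullet> nu = 0" by (simp add: w_def nu_orth_component)
  moreover have "R w = y - (nu \<bullet> w0) *\<^sub>R R nu"
    by (simp add: w_def w0 linear_diff[OF R(1)] linear_scale[OF R(1)])
  moreover from calculation have "nu \<bullet> w0 = 0"
    using R_orth[of w] assms R(3) by (auto simp: inner_diff_left norm_eq_1[symmetric])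
  ultimately show ?thesis using that by simp
qed


lemma ball_subset_proj_map_quadric_chart:
  assumes th: "th \<ge> 0" and r: "0 < r" "r * (1 + 2 * eps) \<le> 1"
    "(1 + th) * (1 + eps) * r\<^sup>2 \<le> 1 - 8 * eps"
    and inner: "\<And>x. height x > (1 + th) * (norm (R (tangential x)))\<^sup>2 + (eps / d) * (height x)\<^sup>2
      \<Longrightarrow> x \<in> D"
  shows "ball 0 r \<subseteq> proj_map f ` D"
proof
  fix P :: 'a assume "P \<in> ball 0 r"
  define X where "X = P \<bullet> R nu"
  define Y where "Y = P - X *\<^sub>R R nu"
  have Y_orth: "Y \<bullet> R nu = 0"
    using R(3) by (simp add: Y_def X_def inner_diff_left norm_eq_1[symmetric])
  have "(norm P)\<^sup>2 = X\<^sup>2 + (norm Y)\<^sup>2"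
    using norm_add_Pythagorean[of "X *\<^sub>R R nu" Y] Y_orth R(3)
    by (simp add: Y_def orthogonal_def inner_commute power_mult_distrib)
  with \<open>P \<in> ball 0 r\<close> have XY: "X\<^sup>2 + (norm Y)\<^sup>2 < r\<^sup>2"
    using power_strict_mono[of "norm P" r 2] by simp
  have "r \<le> 1" using r(1,2) eps mult_left_mono[of 1 "1 + 2 * eps" r] by linarith
  have "X\<^sup>2 < r\<^sup>2" using XY zero_le_power2[of "norm Y"] by linarith
  then have "\<bar>X\<bar> < r" using r(1) power2_less_imp_less[of "\<bar>X\<bar>" r] by simp
  define \<delta> where "\<delta> = 1 - X * (1 + 2 * eps)"
  have "X * (1 + 2 * eps) < r * (1 + 2 * eps)"
    using \<open>\<bar>X\<bar> < r\<close> eps by (intro mult_strict_right_mono) auto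
  then have "\<delta> > 0" using r(2) by (simp add: \<delta>_def)
  define \<sigma> where "\<sigma> = (1 + X) / \<delta>"
  define T where "T = 2 * (1 + eps) / \<delta>"
  have T: "\<sigma> * (1 + 2 * eps) + 1 = T" "\<sigma> - 1 = X * T"
    using \<open>\<delta> > 0\<close> by (simp_all add: \<sigma>_def T_def \<delta>_def field_simps)
  have "T > 0" using \<open>\<delta> > 0\<close> eps by (simp add: T_def)
  obtain w where w: "w \<bullet> nu = 0" "R w = (T / c) *\<^sub>R Y"
    using R_onto_orth[of "(T / c) *\<^sub>R Y"] Y_orth by auto
  define x where "x = q + (d * \<sigma>) *\<^sub>R nu + w"
  have hx: "height x = d * \<sigma>" "tangential x = w"
    using height_tangential_point[OF w(1)] by (simp_all add: x_def)
  have "proj_map f x = inverse T *\<^sub>R ((X * T) *\<^sub>R R nu + c *\<^sub>R ((T / c) *\<^sub>R Y))"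
    using d by (simp add: proj_map_quadric_chart hx w(2) T)
  also have "\<dots> = P"
    using \<open>T > 0\<close> c_pos by (simp add: Y_def scaleR_add_right)
  finally have "proj_map f x = P" .
  moreover have "x \<in> D"
  proof (rule inner)
    have "(norm (R w))\<^sup>2 = T\<^sup>2 / c\<^sup>2 * (norm Y)\<^sup>2"
      by (simp add: w(2) power_mult_distrib power_divide)
    also have "\<dots> = (2 * (1 + eps) / \<delta>)\<^sup>2 / (4 * (1 + eps) / d) * (norm Y)\<^sup>2"
      by (simp only: c_sq T_def)
    also have "\<dots> = d * (1 + eps) / \<delta>\<^sup>2 * (norm Y)\<^sup>2"
    proof -
      have "(2 * k / \<delta>)\<^sup>2 / (4 * k / d) = d * k / \<delta>\<^sup>2" if "k > 0" for k
        using that d \<open>\<delta> > 0\<close> by (simp add: power2_eq_square field_simps)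
      from this[of "1 + eps"] eps show ?thesis by (simp only:)
    qed
    finally have "(norm (R w))\<^sup>2 = d * (1 + eps) / \<delta>\<^sup>2 * (norm Y)\<^sup>2" .
    then have "(1 + th) * (norm (R (tangential x)))\<^sup>2 + (eps / d) * (height x)\<^sup>2
        = (1 + th) * (d * (1 + eps) / \<delta>\<^sup>2 * (norm Y)\<^sup>2) + (eps / d) * (d * \<sigma>)\<^sup>2"
      by (simp only: hx)
    also have "\<dots> = d / \<delta>\<^sup>2 * ((1 + th) * (1 + eps) * (norm Y)\<^sup>2 + eps * (1 + X)\<^sup>2)"
      using d \<open>\<delta> > 0\<close> by (simp add: \<sigma>_def field_simps power2_eq_square)
    also have "\<dots> < d / \<delta>\<^sup>2 * ((1 + X) * \<delta>)"
      using quadric_chart_inner_estimate[OF eps th _ XY r(3)] \<open>\<bar>X\<bar> < r\<close> \<open>r \<le> 1\<close> d \<open>\<delta> > 0\<close>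
      by (intro mult_strict_left_mono) (auto simp: \<delta>_def)
    also have "\<dots> = height x"
      using \<open>\<delta> > 0\<close> by (simp add: hx \<sigma>_def power2_eq_square)
    finally show "height x > (1 + th) * (norm (R (tangential x)))\<^sup>2 + (eps / d) * (height x)\<^sup>2" .
  qed
  ultimately show "P \<in> proj_map f ` D" by blast
qed

lemma squeeze_radius_between_quadrics:
  assumes th: "th \<ge> 0" and r: "0 < r" "r * (1 + 2 * eps) \<le> 1"
    "(1 + th) * (1 + eps) * r\<^sup>2 \<le> 1 - 8 * eps"
    and outer: "\<And>x. x \<in> D \<Longrightarrow>
      height x > 0 \<and> (norm (R (tangential x)))\<^sup>2 < height x + (eps / d) * (height x)\<^sup>2"
    and inner: "\<And>x. height x > (1 + th) * (norm (R (tangential x)))\<^sup>2 + (eps / d) * (height x)\<^sup>2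
      \<Longrightarrow> x \<in> D"
  shows "r \<in> squeeze_radii D (q + d *\<^sub>R nu)"
proof -
  have "proj_defined_on f D"
    unfolding proj_defined_on_def
  proof
    fix x assume "x \<in> D"
    then have "height x / d * (1 + 2 * eps) \<ge> 0"
      using outer d eps by (simp add: less_imp_le)
    then show "fst (f (1, x)) \<noteq> 0"
      by (simp add: quadric_chart_def normal_height_def)
  qed
  moreover have "proj_map f (q + d *\<^sub>R nu) = 0"
    using height_tangential_point[of 0 d] d by (simp add: proj_map_quadric_chart linear_0[OF R(1)])
  moreover have "proj_map f ` D \<subseteq> ball 0 1"
    using outer norm_proj_map_quadric_chart_less_1 by auto
  ultimately show ?thesis
    unfolding squeeze_radii_def
    using r(1) proj_lin_quadric_chart ball_subset_proj_map_quadric_chart[OF th r inner] by blast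
qed

end

lemma second_order_remainder_bound:
  fixes \<phi> \<psi> \<psi>' :: "real \<Rightarrow> real"
  assumes \<phi>: "\<And>t. 0 \<le> t \<Longrightarrow> t \<le> 1 \<Longrightarrow> (\<phi> has_real_derivative \<psi> t) (at t)"
    and \<psi>: "\<And>t. 0 \<le> t \<Longrightarrow> t \<le> 1 \<Longrightarrow> (\<psi> has_real_derivative \<psi>' t) (at t)"
    and "\<psi> 0 = 0" and bound: "\<And>t. 0 \<le> t \<Longrightarrow> t \<le> 1 \<Longrightarrow> \<bar>\<psi>' t\<bar> \<le> B"
  shows "\<bar>\<phi> 1 - \<phi> 0\<bar> \<le> B"
proof -
  have \<psi>_bound: "\<bar>\<psi> t\<bar> \<le> B" if "0 < t" "t \<le> 1" for t
  proof -
    have "\<And>x. 0 \<le> x \<Longrightarrow> x \<le> t \<Longrightarrow> (\<psi> has_real_derivative \<psi>' x) (at x)"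
      using \<psi> that by simp
    then obtain z where "0 < z" "z < t" "\<psi> t - \<psi> 0 = (t - 0) * \<psi>' z"
      using MVT2[OF \<open>0 < t\<close>] by blast
    then have "\<bar>\<psi> t\<bar> = t * \<bar>\<psi>' z\<bar>" using \<open>\<psi> 0 = 0\<close> that by (simp add: abs_mult)
    also have "\<dots> \<le> 1 * B" using bound[of z] \<open>0 < z\<close> \<open>z < t\<close> that by (intro mult_mono) auto
    finally show ?thesis by simp
  qed
  obtain z where "0 < z" "z < 1" "\<phi> 1 - \<phi> 0 = (1 - 0) * \<psi> z"
    using MVT2[of 0 1 \<phi> \<psi>] \<phi> by auto
  then show ?thesis using \<psi>_bound[of z] by simp
qed

lemma second_order_taylor_bound:
  fixes \<rho> :: "'a::euclidean_space \<Rightarrow> real" and g :: "'a \<Rightarrow> 'a" and H :: "'a \<Rightarrow> 'a \<Rightarrow>\<^sub>L 'a"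
  assumes "convex S"
    and \<rho>: "\<And>x. x \<in> S \<Longrightarrow> (\<rho> has_derivative (\<lambda>v. g x \<bullet> v)) (at x)"
    and g: "\<And>x. x \<in> S \<Longrightarrow> (g has_derivative blinfun_apply (H x)) (at x)"
    and H: "\<And>x. x \<in> S \<Longrightarrow> norm (H x - H q) \<le> \<omega>"
    and "q \<in> S" "q + h \<in> S"
  shows "\<bar>\<rho> (q + h) - \<rho> q - g q \<bullet> h - (h \<bullet> H q h) / 2\<bar> \<le> \<omega> * (norm h)\<^sup>2"
proof -
  have seg: "q + t *\<^sub>R h \<in> S" if "0 \<le> t" "t \<le> 1" for t
    using convexD[OF \<open>convex S\<close> \<open>q \<in> S\<close> \<open>q + h \<in> S\<close>, of "1 - t" t] that
    by (simp add: algebra_simps)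
  define c where "c = h \<bullet> H q h"
  define \<phi> where "\<phi> t = \<rho> (q + t *\<^sub>R h) - t * (g q \<bullet> h) - t\<^sup>2 / 2 * c" for t
  define \<psi> where "\<psi> t = g (q + t *\<^sub>R h) \<bullet> h - g q \<bullet> h - t * c" for t
  have "\<bar>\<phi> 1 - \<phi> 0\<bar> \<le> \<omega> * (norm h)\<^sup>2"
  proof (rule second_order_remainder_bound)
    fix t :: real assume t: "0 \<le> t" "t \<le> 1"
    have "((\<lambda>t. \<rho> (q + t *\<^sub>R h)) has_derivative (\<lambda>s. g (q + t *\<^sub>R h) \<bullet> (s *\<^sub>R h))) (at t)"
      by (rule has_derivative_compose[where f="\<lambda>t. q + t *\<^sub>R h", OF _ \<rho>[OF seg[OF t]]]) (auto intro!: derivative_eq_intros)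
    then show "(\<phi> has_real_derivative \<psi> t) (at t)"
      unfolding \<phi>_def \<psi>_def has_field_derivative_def
      by (auto intro!: derivative_eq_intros simp: algebra_simps)
    have "((\<lambda>t. g (q + t *\<^sub>R h)) has_derivative (\<lambda>s. H (q + t *\<^sub>R h) (s *\<^sub>R h))) (at t)"
      by (rule has_derivative_compose[where f="\<lambda>t. q + t *\<^sub>R h", OF _ g[OF seg[OF t]]]) (auto intro!: derivative_eq_intros)
    then show "(\<psi> has_real_derivative (H (q + t *\<^sub>R h) h \<bullet> h - c)) (at t)"
      unfolding \<psi>_def has_field_derivative_def
      by (auto intro!: derivative_eq_intros simp: blinfun.scaleR_right algebra_simps)
    have "\<bar>H (q + t *\<^sub>R h) h \<bullet> h - c\<bar> = \<bar>h \<bullet> (H (q + t *\<^sub>R h) - H q) h\<bar>"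
      by (simp add: c_def blinfun.diff_left inner_diff_left inner_diff_right inner_commute)
    also have "\<dots> \<le> norm h * (norm (H (q + t *\<^sub>R h) - H q) * norm h)"
      by (rule order_trans[OF Cauchy_Schwarz_ineq2 mult_left_mono[OF norm_blinfun]]) simp
    also have "\<dots> \<le> norm h * (\<omega> * norm h)"
      using H[OF seg[OF t]] by (intro mult_left_mono mult_right_mono) auto
    finally show "\<bar>H (q + t *\<^sub>R h) h \<bullet> h - c\<bar> \<le> \<omega> * (norm h)\<^sup>2"
      by (simp add: power2_eq_square algebra_simps)
  qed (simp add: \<psi>_def)
  then show ?thesis by (simp add: \<phi>_def c_def)
qed

lemma inner_blinfun_le:
  fixes A :: "'a::euclidean_space \<Rightarrow>\<^sub>L 'a"
  shows "\<bar>u \<bullet> A v\<bar> \<le> norm A * norm u * norm v"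
proof -
  have "\<bar>u \<bullet> A v\<bar> \<le> norm u * norm (A v)" by (rule Cauchy_Schwarz_ineq2)
  also have "\<dots> \<le> norm u * (norm A * norm v)" by (intro mult_left_mono norm_blinfun) auto
  finally show ?thesis by (simp add: algebra_simps)
qed

lemma young_product:
  fixes x y \<epsilon> :: real
  assumes "\<epsilon> > 0"
  shows "2 * x * y \<le> \<epsilon> * x\<^sup>2 + y\<^sup>2 / \<epsilon>"
proof -
  have "0 \<le> (\<epsilon> * x - y)\<^sup>2 / \<epsilon>" using assms by simp
  also have "\<dots> = \<epsilon> * x\<^sup>2 + y\<^sup>2 / \<epsilon> - 2 * x * y"
    using assms by (simp add: power2_eq_square field_simps)
  finally show ?thesis by simp
qed

lemma quadratic_form_perturb:
  fixes A :: "'a::euclidean_space \<Rightarrow>\<^sub>L 'a"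
  assumes "norm A \<le> M" "norm nu = 1" "\<epsilon> > 0"
  shows "\<bar>(s *\<^sub>R nu + w) \<bullet> A (s *\<^sub>R nu + w) - w \<bullet> A w\<bar> \<le> (M + M\<^sup>2 / \<epsilon>) * s\<^sup>2 + \<epsilon> * (norm w)\<^sup>2"
proof -
  have "M \<ge> 0" using assms(1) norm_ge_zero order_trans by blast
  have "\<bar>nu \<bullet> A nu\<bar> \<le> M"
    using inner_blinfun_le[of nu A nu] assms(1,2) by simp
  then have 1: "\<bar>s\<^sup>2 * (nu \<bullet> A nu)\<bar> \<le> M * s\<^sup>2"
    using mult_right_mono[of "\<bar>nu \<bullet> A nu\<bar>" M "s\<^sup>2"] by (simp add: abs_mult mult.commute)
  have "\<bar>nu \<bullet> A w + w \<bullet> A nu\<bar> \<le> 2 * M * norm w"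
    using inner_blinfun_le[of nu A w] inner_blinfun_le[of w A nu] assms(1,2)
      mult_right_mono[OF assms(1), of "norm w"] by (simp add: algebra_simps)
  then have "\<bar>s * (nu \<bullet> A w + w \<bullet> A nu)\<bar> \<le> \<bar>s\<bar> * (2 * M * norm w)"
    unfolding abs_mult by (intro mult_left_mono) auto
  also have "\<dots> = 2 * norm w * (M * \<bar>s\<bar>)"
    by simp
  also have "\<dots> \<le> \<epsilon> * (norm w)\<^sup>2 + (M * \<bar>s\<bar>)\<^sup>2 / \<epsilon>"
    by (rule young_product[OF assms(3)])
  finally have 2: "\<bar>s * (nu \<bullet> A w + w \<bullet> A nu)\<bar> \<le> \<epsilon> * (norm w)\<^sup>2 + M\<^sup>2 / \<epsilon> * s\<^sup>2"
    by (simp add: power_mult_distrib)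
  have "(s *\<^sub>R nu + w) \<bullet> A (s *\<^sub>R nu + w) - w \<bullet> A w = s\<^sup>2 * (nu \<bullet> A nu) + s * (nu \<bullet> A w + w \<bullet> A nu)"
    by (simp add: blinfun.add_right blinfun.scaleR_right inner_add_left inner_add_right
        power2_eq_square algebra_simps)
  then show ?thesis
    using 1 2 by (simp add: algebra_simps)
qed

lemma hyperplane_coercive:
  fixes A :: "'a::euclidean_space \<Rightarrow>\<^sub>L 'a"
  assumes pos: "\<And>v. v \<noteq> 0 \<Longrightarrow> a \<bullet> v = 0 \<Longrightarrow> v \<bullet> A v > 0"
  obtains lam where "lam > 0" "\<And>w. a \<bullet> w = 0 \<Longrightarrow> w \<bullet> A w \<ge> lam * (norm w)\<^sup>2"
proof -
  define K where "K = sphere 0 1 \<inter> {v. a \<bullet> v = 0}"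
  \<comment> \<open>a lower bound of the form on the unit vectors of the hyperplane suffices, by homogeneity\<close>
  have scale: "w \<bullet> A w \<ge> lam * (norm w)\<^sup>2"
    if "a \<bullet> w = 0" and bound: "\<And>u. u \<in> K \<Longrightarrow> u \<bullet> A u \<ge> lam" for w lam
  proof (cases "w = 0")
    case False
    define u where "u = w /\<^sub>R norm w"
    have "u \<in> K" using False that(1) by (simp add: K_def u_def)
    moreover have "w \<bullet> A w = (norm w)\<^sup>2 * (u \<bullet> A u)"
      using False by (simp add: u_def blinfun.scaleR_right power2_eq_square field_simps)
    ultimately show ?thesis
      using mult_right_mono[OF bound[of u], of "(norm w)\<^sup>2"] by (simp add: mult.commute)
  qed simp
  show ?thesis
  proof (cases "K = {}")
    case True
    then show ?thesis using that[of 1] scale[of _ 1] by simp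
  next
    case False
    have "compact K" unfolding K_def by (intro compact_Int_closed compact_sphere closed_hyperplane)
    moreover have "continuous_on K (\<lambda>v. v \<bullet> A v)" by (intro continuous_intros)
    ultimately obtain u where u: "u \<in> K" "\<And>v. v \<in> K \<Longrightarrow> u \<bullet> A u \<le> v \<bullet> A v"
      using continuous_attains_inf[OF _ False] by blast
    have "u \<noteq> 0" "a \<bullet> u = 0" using u(1) by (auto simp: K_def)
    then have "u \<bullet> A u > 0" by (rule pos)
    then show ?thesis using that scale u(2) by blast
  qed
qed

lemma penalized_coercive:
  fixes A :: "'a::euclidean_space \<Rightarrow>\<^sub>L 'a"
  assumes "a \<noteq> 0" "lam > 0" and coercive: "\<And>w. a \<bullet> w = 0 \<Longrightarrow> w \<bullet> A w \<ge> lam * (norm w)\<^sup>2"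
  obtains K where "K > 0" "\<And>v. v \<bullet> A v + K * (a \<bullet> v)\<^sup>2 \<ge> lam / 2 * (norm v)\<^sup>2"
proof
  define M where "M = norm A"
  define K where "K = (M + M\<^sup>2 / (lam / 2) + lam / 2) / (norm a)\<^sup>2"
  show "K > 0" using assms by (simp add: K_def M_def add_nonneg_pos)
  fix v
  define nu where "nu = a /\<^sub>R norm a"
  have nu: "norm nu = 1" using assms(1) by (simp add: nu_def)
  define s where "s = normal_height 0 nu v"
  define w where "w = tangential_part 0 nu v"
  note dec = normal_decomposition[OF nu, where q=0 and x=v, folded s_def w_def]
  have "a \<bullet> w = 0" using dec(2) assms(1) by (simp add: nu_def inner_commute)
  have "a \<bullet> v = norm a * s" using assms(1) by (simp add: s_def normal_height_def nu_def)
  then have "K * (a \<bullet> v)\<^sup>2 = (M + M\<^sup>2 / (lam / 2) + lam / 2) * s\<^sup>2"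
    using assms(1) by (simp add: K_def power_mult_distrib)
  moreover have "\<bar>v \<bullet> A v - w \<bullet> A w\<bar> \<le> (M + M\<^sup>2 / (lam / 2)) * s\<^sup>2 + lam / 2 * (norm w)\<^sup>2"
    using quadratic_form_perturb[of A M nu "lam / 2" s w] dec(1) nu assms(2) by (simp add: M_def)
  ultimately show "v \<bullet> A v + K * (a \<bullet> v)\<^sup>2 \<ge> lam / 2 * (norm v)\<^sup>2"
    using coercive[OF \<open>a \<bullet> w = 0\<close>] dec(3) by (simp add: algebra_simps abs_le_iff)
qed

lemma nearest_frontier_point:
  fixes D :: "'a::euclidean_space set"
  assumes "open D" "z \<in> D" "p \<notin> D"
  obtains q where "q \<notin> D" "q \<in> closure D" "dist z q > 0" "dist z q \<le> dist z p"
    "ball z (dist z q) \<subseteq> D"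
proof -
  obtain q where q: "q \<in> - D" "\<And>y. y \<in> - D \<Longrightarrow> dist z q \<le> dist z y"
    using distance_attains_inf[of "- D" z] assms by (auto simp: closed_Compl)
  have "dist z q > 0" using q(1) assms(2) by auto
  moreover have ball: "ball z (dist z q) \<subseteq> D" using q(2) by force
  moreover have "q \<in> closure D"
    using closure_mono[OF ball] \<open>dist z q > 0\<close> by (auto simp: dist_commute)
  ultimately show ?thesis using that q assms(3) by simp
qed

locale strictly_convex_chart =
  fixes D :: "'a::euclidean_space set" and p :: 'a and U :: "'a set"
    and \<rho> :: "'a \<Rightarrow> real" and g :: "'a \<Rightarrow> 'a" and H :: "'a \<Rightarrow> 'a \<Rightarrow>\<^sub>L 'a"
  assumes open_D: "open D" and convex_D: "convex D" and p_frontier: "p \<in> frontier D"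
    and open_U: "open U" and p_U: "p \<in> U"
    and \<rho>_deriv: "\<And>x. x \<in> U \<Longrightarrow> (\<rho> has_derivative (\<lambda>v. g x \<bullet> v)) (at x)"
    and g_deriv: "\<And>x. x \<in> U \<Longrightarrow> (g has_derivative blinfun_apply (H x)) (at x)"
    and H_cont: "continuous_on U H" and g_nonzero: "\<And>x. x \<in> U \<Longrightarrow> g x \<noteq> 0"
    and D_U: "D \<inter> U = {x \<in> U. \<rho> x < 0}"
    and H_pos: "\<And>v. v \<noteq> 0 \<Longrightarrow> g p \<bullet> v = 0 \<Longrightarrow> v \<bullet> H p v > 0"
begin

definition normal :: "'a \<Rightarrow> 'a" where "normal q = - (g q /\<^sub>R norm (g q))"

abbreviation "depth q \<equiv> normal_height q (normal q)"
abbreviation "tang q \<equiv> tangential_part q (normal q)"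

lemma normal:
  assumes "q \<in> U"
  shows "norm (normal q) = 1" "g q = - norm (g q) *\<^sub>R normal q"
  using g_nonzero[OF assms] by (simp_all add: normal_def)

lemma p_not_in_D: "p \<notin> D"
  using p_frontier open_D by (simp add: frontier_def interior_open)

end

locale uniform_chart = strictly_convex_chart +
  fixes lam M gp r1 :: real
  assumes lam: "lam > 0" and M: "M \<ge> 0" and gp: "gp > 0" and r1: "r1 > 0" "cball p r1 \<subseteq> U"
    and H_coercive: "\<And>q w. q \<in> cball p r1 \<Longrightarrow> g q \<bullet> w = 0 \<Longrightarrow> w \<bullet> H q w \<ge> lam * (norm w)\<^sup>2"
    and g_bounds: "\<And>q. q \<in> cball p r1 \<Longrightarrow> gp / 2 \<le> norm (g q) \<and> norm (g q) \<le> 2 * gp"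
    and H_bound: "\<And>q. q \<in> cball p r1 \<Longrightarrow> norm (H q) \<le> M"

context strictly_convex_chart
begin

lemma uniform_chart_exists:
  obtains lam M gp r1 where "uniform_chart D p U \<rho> g H lam M gp r1"
proof -
  obtain lam0 where lam0: "lam0 > 0" "\<And>w. g p \<bullet> w = 0 \<Longrightarrow> w \<bullet> H p w \<ge> lam0 * (norm w)\<^sup>2"
    using hyperplane_coercive[of "g p" "H p"] H_pos by blast
  have "g p \<noteq> 0" using g_nonzero p_U by simp
  then obtain K where K: "K > 0" "\<And>v. v \<bullet> H p v + K * (g p \<bullet> v)\<^sup>2 \<ge> lam0 / 2 * (norm v)\<^sup>2"
    using penalized_coercive[of "g p" lam0 "H p"] lam0 by blast
  define gp where "gp = norm (g p)"
  define \<epsilon> where "\<epsilon> = min (gp / 2) (min 1 (lam0 / (8 * K)))"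
  have \<epsilon>: "\<epsilon> > 0" "\<epsilon> \<le> gp / 2" "\<epsilon> \<le> 1" "\<epsilon> \<le> lam0 / (8 * K)"
    using \<open>g p \<noteq> 0\<close> lam0 K by (auto simp: \<epsilon>_def gp_def)
  have "isCont H p" using H_cont open_U p_U continuous_on_eq_continuous_at by blast
  moreover have "isCont g p" using g_deriv[OF p_U] has_derivative_continuous by blast
  ultimately obtain r1 where r1: "r1 > 0" "cball p r1 \<subseteq> U"
    and H_near: "\<And>q. q \<in> cball p r1 \<Longrightarrow> norm (H q - H p) < lam0 / 8"
    and g_near: "\<And>q. q \<in> cball p r1 \<Longrightarrow> norm (g q - g p) < \<epsilon>"
  proof -
    obtain d0 where d0: "d0 > 0" "cball p d0 \<subseteq> U" using open_U p_U open_contains_cball by blast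
    obtain d1 where d1: "d1 > 0" "\<And>q. dist q p < d1 \<Longrightarrow> dist (H q) (H p) < lam0 / 8"
      using \<open>isCont H p\<close> lam0 unfolding continuous_at_eps_delta by (meson divide_pos_pos zero_less_numeral)
    obtain d2 where d2: "d2 > 0" "\<And>q. dist q p < d2 \<Longrightarrow> dist (g q) (g p) < \<epsilon>"
      using \<open>isCont g p\<close> \<epsilon> unfolding continuous_at_eps_delta by meson
    define r1 where "r1 = min d0 (min (d1 / 2) (d2 / 2))"
    have "cball p r1 \<subseteq> U" using d0 by (auto simp: r1_def)
    moreover have "dist q p < d1" "dist q p < d2" if "q \<in> cball p r1" for q
      using that d1 d2 by (auto simp: r1_def dist_commute)
    ultimately show ?thesis
      using that[of r1] d0 d1 d2 by (auto simp: r1_def dist_norm)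
  qed
  show ?thesis
  proof (rule that, unfold_locales)
    show "lam0 / 4 > 0" "norm (H p) + lam0 / 8 \<ge> 0" "gp > 0"
      using lam0 \<open>g p \<noteq> 0\<close> by (simp_all add: gp_def add_nonneg_pos)
    show "r1 > 0" "cball p r1 \<subseteq> U" by (fact r1)+
    fix q assume q: "q \<in> cball p r1"
    show "norm (H q) \<le> norm (H p) + lam0 / 8"
      using H_near[OF q] norm_triangle_ineq2[of "H q" "H p"] by linarith
    show "gp / 2 \<le> norm (g q) \<and> norm (g q) \<le> 2 * gp"
      using g_near[OF q] \<epsilon> norm_triangle_ineq2[of "g q" "g p"] norm_triangle_ineq3[of "g q" "g p"]
      unfolding gp_def by linarith
    fix w assume "g q \<bullet> w = 0"
    \<comment> \<open>on the tangent hyperplane at q, the penalty term is small since g q is close to g p\<close>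
    have "\<bar>w \<bullet> H q w - w \<bullet> H p w\<bar> \<le> lam0 / 8 * (norm w)\<^sup>2"
      using inner_blinfun_le[of w "H q - H p" w] H_near[OF q]
        mult_right_mono[of "norm (H q - H p)" "lam0 / 8" "norm w * norm w"]
      by (simp add: blinfun.diff_left inner_diff_right power2_eq_square mult.assoc)
    moreover have "K * (g p \<bullet> w)\<^sup>2 \<le> lam0 / 8 * (norm w)\<^sup>2"
    proof -
      have "\<bar>g p \<bullet> w\<bar> \<le> \<epsilon> * norm w"
        using \<open>g q \<bullet> w = 0\<close> Cauchy_Schwarz_ineq2[of "g p - g q" w] g_near[OF q]
          mult_right_mono[of "norm (g q - g p)" \<epsilon> "norm w"]
        by (simp add: inner_diff_left norm_minus_commute)
      then have "(g p \<bullet> w)\<^sup>2 \<le> \<epsilon> * \<epsilon> * (norm w)\<^sup>2"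
        by (metis abs_ge_zero power2_abs power_mono power_mult_distrib power2_eq_square)
      also have "\<dots> \<le> lam0 / (8 * K) * (norm w)\<^sup>2"
        using \<epsilon> mult_mono[of \<epsilon> "lam0 / (8 * K)" \<epsilon> 1] by (intro mult_right_mono) auto
      finally show ?thesis using K(1) by (simp add: field_simps)
    qed
    ultimately show "w \<bullet> H q w \<ge> lam0 / 4 * (norm w)\<^sup>2"
      using K(2)[of w] unfolding abs_le_iff by linarith
  qed
qed

end

locale taylor_ball = uniform_chart +
  fixes \<omega> r :: real
  assumes \<omega>: "\<omega> > 0" "\<omega> \<le> lam / 9" and r: "r > 0" "2 * r \<le> r1"
    and H_osc: "\<And>x. x \<in> cball p (2 * r) \<Longrightarrow> norm (H x - H p) \<le> \<omega> / 2"
begin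

definition C_taylor :: real where "C_taylor = (M + M\<^sup>2 / \<omega>) / 2 + \<omega>"

lemma C_taylor_pos: "C_taylor > 0"
  using \<omega> M by (simp add: C_taylor_def add_nonneg_pos)

lemma near_p:
  assumes "q \<in> cball p r"
  shows "q \<in> U" "q \<in> cball p r1" "g q \<noteq> 0" "norm (g q) \<le> 2 * gp" "norm (H q) \<le> M"
proof -
  show "q \<in> cball p r1" using assms r by auto
  then show "q \<in> U" "g q \<noteq> 0" "norm (g q) \<le> 2 * gp" "norm (H q) \<le> M"
    using r1 g_nonzero g_bounds H_bound by auto
qed

lemma rho_taylor:
  assumes q: "q \<in> cball p r" and x: "norm (x - q) \<le> r"
  shows "\<bar>\<rho> x - \<rho> q - g q \<bullet> (x - q) - ((x - q) \<bullet> H q (x - q)) / 2\<bar> \<le> \<omega> * (norm (x - q))\<^sup>2"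
proof -
  have balls: "q \<in> cball p (2 * r)" "x \<in> cball p (2 * r)" "cball p (2 * r) \<subseteq> U"
    using q x r r1 dist_triangle[of p x q] by (auto simp: dist_norm norm_minus_commute)
  have H_near: "norm (H y - H q) \<le> \<omega>" if "y \<in> cball p (2 * r)" for y
    using H_osc[OF that] H_osc[OF balls(1)] norm_triangle_ineq4[of "H y - H p" "H q - H p"] by simp
  have "\<bar>\<rho> (q + (x - q)) - \<rho> q - g q \<bullet> (x - q) - ((x - q) \<bullet> H q (x - q)) / 2\<bar>
      \<le> \<omega> * (norm (x - q))\<^sup>2"
    by (rule second_order_taylor_bound[OF convex_cball]) (use balls H_near \<rho>_deriv g_deriv in auto)
  then show ?thesis by simp
qed

lemma rho_neg_near:
  assumes "q \<in> cball p r" "norm (x - q) \<le> r" "x \<in> D"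
  shows "\<rho> x < 0"
proof -
  have "x \<in> U" using assms(1,2) r r1 dist_triangle[of p x q] by (auto simp: dist_norm norm_minus_commute)
  then show ?thesis using D_U assms(3) by blast
qed

lemma rho_quadratic_bounds:
  assumes q: "q \<in> cball p r" "\<rho> q = 0" and x: "norm (x - q) \<le> r"
  shows "\<rho> x \<le> - (norm (g q) * depth q x)
      + (tang q x \<bullet> H q (tang q x) + 3 * \<omega> * (norm (tang q x))\<^sup>2) / 2 + C_taylor * (depth q x)\<^sup>2"
    and "\<rho> x \<ge> - (norm (g q) * depth q x)
      + (tang q x \<bullet> H q (tang q x) - 3 * \<omega> * (norm (tang q x))\<^sup>2) / 2 - C_taylor * (depth q x)\<^sup>2"
proof -
  define s w where "s = depth q x" and "w = tang q x"
  note nu = normal[OF near_p(1)[OF q(1)]]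
  note dec = normal_decomposition[OF nu(1), where q=q and x=x, folded s_def w_def]
  define Q A E X where "Q = (x - q) \<bullet> H q (x - q)" and "A = w \<bullet> H q w"
    and "E = \<omega> * (norm w)\<^sup>2" and "X = (M + M\<^sup>2 / \<omega>) * s\<^sup>2"
  have "x - q = s *\<^sub>R normal q + w"
    using dec(1) by (metis add.assoc add_diff_cancel_left')
  then have "\<bar>Q - A\<bar> \<le> X + E"
    using quadratic_form_perturb[OF near_p(5)[OF q(1)] nu(1) \<omega>(1), of s w] by (simp add: Q_def A_def E_def X_def)
  moreover have "g q \<bullet> (x - q) = - (norm (g q) * s)"
    by (subst nu(2)) (simp add: s_def normal_height_def)
  moreover have "\<omega> * (norm (x - q))\<^sup>2 = \<omega> * s\<^sup>2 + E"
    using dec(3) by (simp add: E_def algebra_simps)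
  ultimately have "\<bar>\<rho> x + norm (g q) * s - Q / 2\<bar> \<le> \<omega> * s\<^sup>2 + E"
    using rho_taylor[OF q(1) x] q(2) by (simp add: Q_def)
  then have "\<rho> x \<le> - (norm (g q) * s) + (A + 3 * E) / 2 + (X / 2 + \<omega> * s\<^sup>2)"
    and "\<rho> x \<ge> - (norm (g q) * s) + (A - 3 * E) / 2 - (X / 2 + \<omega> * s\<^sup>2)"
    using \<open>\<bar>Q - A\<bar> \<le> X + E\<close> unfolding abs_le_iff add_divide_distrib diff_divide_distrib
    by linarith+
  moreover have "X / 2 + \<omega> * s\<^sup>2 = C_taylor * s\<^sup>2"
    by (simp add: X_def C_taylor_def algebra_simps)
  ultimately show "\<rho> x \<le> - (norm (g q) * s) + (w \<bullet> H q w + 3 * \<omega> * (norm w)\<^sup>2) / 2 + C_taylor * s\<^sup>2"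
    and "\<rho> x \<ge> - (norm (g q) * s) + (w \<bullet> H q w - 3 * \<omega> * (norm w)\<^sup>2) / 2 - C_taylor * s\<^sup>2"
    by (simp_all add: A_def E_def mult.assoc)
qed

lemma rho_lower_bound:
  assumes q: "q \<in> cball p r" and x: "norm (x - q) \<le> r"
  shows "\<rho> x \<ge> \<rho> q + g q \<bullet> (x - q) - (M / 2 + \<omega>) * (norm (x - q))\<^sup>2"
proof -
  have "\<bar>(x - q) \<bullet> H q (x - q)\<bar> \<le> M * (norm (x - q))\<^sup>2"
    using inner_blinfun_le[of "x - q" "H q" "x - q"] near_p(5)[OF q]
      mult_right_mono[of "norm (H q)" M "norm (x - q) * norm (x - q)"]
    by (simp add: power2_eq_square mult.assoc)
  moreover have "(M / 2 + \<omega>) * (norm (x - q))\<^sup>2 = M * (norm (x - q))\<^sup>2 / 2 + \<omega> * (norm (x - q))\<^sup>2"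
    by (simp add: algebra_simps)
  ultimately show ?thesis
    using rho_taylor[OF q x] unfolding abs_le_iff diff_divide_distrib by linarith
qed

lemma rho_eq_0_boundary:
  assumes q: "q \<in> cball p r" "q \<in> closure D" "q \<notin> D"
  shows "\<rho> q = 0"
proof -
  have "\<not> \<rho> q < 0" using D_U q(3) near_p(1)[OF q(1)] by blast
  moreover have "\<not> \<rho> q > 0"
  proof
    assume pos: "\<rho> q > 0"
    \<comment> \<open>points of D arbitrarily close to q would inherit the positive sign of \<rho> q\<close>
    define K where "K = norm (g q) + M / 2 + \<omega>"
    have K: "K > 0" using \<omega> M by (simp add: K_def add_nonneg_pos)
    obtain x where x: "x \<in> D" "dist x q < min r (min 1 (\<rho> q / (2 * K)))"
      using closure_approachable[of q D] q(2) r pos K by (metis divide_pos_pos min_less_iff_conj zero_less_mult_iff zero_less_numeral zero_less_one)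
    have h: "norm (x - q) \<le> r" "norm (x - q) \<le> 1" "K * norm (x - q) \<le> \<rho> q / 2"
      using x(2) K by (auto simp: dist_norm field_simps)
    have "(norm (x - q))\<^sup>2 \<le> norm (x - q)"
      using h(2) by (simp add: power2_eq_square mult_left_le_one_le)
    then have "(M / 2 + \<omega>) * (norm (x - q))\<^sup>2 \<le> (M / 2 + \<omega>) * norm (x - q)"
      using M \<omega> by (intro mult_left_mono) auto
    moreover have "g q \<bullet> (x - q) \<ge> - (norm (g q) * norm (x - q))"
      using Cauchy_Schwarz_ineq2[of "g q" "x - q"] by simp
    ultimately have "\<rho> x \<ge> \<rho> q / 2"
      using rho_lower_bound[OF q(1) h(1)] h(3) by (simp add: K_def algebra_simps)
    then show False using rho_neg_near[OF q(1) h(1) x(1)] pos by simp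
  qed
  ultimately show ?thesis by simp
qed


lemma gradient_separates:
  assumes q: "q \<in> cball p r" "q \<in> closure D" "q \<notin> D" and x: "x \<in> D"
  shows "g q \<bullet> (x - q) < 0"
proof (rule ccontr)
  assume "\<not> g q \<bullet> (x - q) < 0"
  have "g q \<noteq> 0" using near_p(3)[OF q(1)] .
  obtain \<tau> where \<tau>: "\<tau> > 0" "ball x \<tau> \<subseteq> D" using open_D x openE by blast
  define v where "v = x + (\<tau> / (2 * norm (g q))) *\<^sub>R g q - q"
  have "q + v \<in> D" using \<tau> \<open>g q \<noteq> 0\<close> by (intro subsetD[OF \<tau>(2)]) (simp add: v_def dist_norm)
  have "g q \<bullet> v = g q \<bullet> (x - q) + \<tau> * norm (g q) / 2"
    using \<open>g q \<noteq> 0\<close> by (simp add: v_def inner_add_right inner_diff_right power2_norm_eq_inner[symmetric] power2_eq_square)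
  moreover have "\<tau> * norm (g q) / 2 > 0" using \<tau>(1) \<open>g q \<noteq> 0\<close> by simp
  ultimately have gv: "g q \<bullet> v > 0" using \<open>\<not> g q \<bullet> (x - q) < 0\<close> by linarith
  then have "v \<noteq> 0" by auto
  \<comment> \<open>along the segment from q into D, \<rho> starts at 0 with slope g q \<bullet> v > 0, contradicting \<rho> < 0 on D\<close>
  define K where "K = M / 2 + \<omega>"
  have K: "K > 0" using \<omega> M by (simp add: K_def add_nonneg_pos)
  define t where "t = min 1 (min (r / norm v) (g q \<bullet> v / (2 * K * (norm v)\<^sup>2)))"
  have "t \<le> r / norm v" "t \<le> g q \<bullet> v / (2 * K * (norm v)\<^sup>2)"
    by (simp_all add: t_def)
  then have t: "0 < t" "t \<le> 1" "t * norm v \<le> r" "t * K * (norm v)\<^sup>2 \<le> g q \<bullet> v / 2"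
    using r gv K \<open>v \<noteq> 0\<close> by (auto simp: t_def pos_le_divide_eq mult.commute mult.left_commute)
  have "q + t *\<^sub>R v \<in> D"
    using mem_interior_closure_convex_shrink[OF convex_D _ q(2) t(1,2), of "q + v"] \<open>q + v \<in> D\<close> open_D
    by (simp add: interior_open)
  moreover have tv: "norm (q + t *\<^sub>R v - q) \<le> r" using t(1,3) by simp
  ultimately have "\<rho> (q + t *\<^sub>R v) < 0" using rho_neg_near[OF q(1)] by blast
  moreover have "\<rho> (q + t *\<^sub>R v) \<ge> t * (g q \<bullet> v) - (M / 2 + \<omega>) * (norm (t *\<^sub>R v))\<^sup>2"
    using rho_lower_bound[OF q(1) tv] rho_eq_0_boundary[OF q] by simp
  moreover have "(M / 2 + \<omega>) * (norm (t *\<^sub>R v))\<^sup>2 = t * (t * K * (norm v)\<^sup>2)"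
    using t(1) by (simp add: K_def power_mult_distrib power2_eq_square)
  moreover have "t * (t * K * (norm v)\<^sup>2) \<le> t * (g q \<bullet> v / 2)"
    using t by (intro mult_left_mono) auto
  moreover have "t * (g q \<bullet> v) > 0" using t(1) gv by simp
  ultimately show False by simp
qed


definition C_inner :: real where "C_inner = 4 * gp\<^sup>2 * (1 + 2 / lam) / r\<^sup>2"

text \<open>The defining inequality forces \<open>depth q x < |g q| / C\<close> and \<open>|tang q x|\<^sup>2 < 2 |g q|\<^sup>2 / (lam C)\<close>,
  so \<open>C \<ge> C_inner\<close> keeps x within distance r of q, where the upper Taylor bound applies.\<close>
lemma inner_quadric_in_D:
  assumes q: "q \<in> cball p r" "\<rho> q = 0" and C: "C \<ge> C_taylor" "C \<ge> 1" "C \<ge> C_inner"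
    and ineq: "2 * norm (g q) * depth q x
      > tang q x \<bullet> H q (tang q x) + 3 * \<omega> * (norm (tang q x))\<^sup>2 + 2 * C * (depth q x)\<^sup>2"
  shows "x \<in> D"
proof -
  define s w \<gamma> where "s = depth q x" and "w = tang q x" and "\<gamma> = norm (g q)"
  note nu = normal[OF near_p(1)[OF q(1)]]
  note dec = normal_decomposition[OF nu(1), where q=q and x=x, folded s_def w_def]
  have \<gamma>: "\<gamma> > 0" "\<gamma> \<le> 2 * gp" using near_p[OF q(1)] by (auto simp: \<gamma>_def)
  have "g q \<bullet> w = 0" using dec(2) by (subst nu(2)) (simp add: w_def inner_commute)
  then have "w \<bullet> H q w \<ge> lam * (norm w)\<^sup>2" using H_coercive near_p(2)[OF q(1)] by blast
  moreover have "3 * \<omega> * (norm w)\<^sup>2 \<ge> 0" using \<omega>(1) by simp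
  ultimately have main: "2 * \<gamma> * s > lam * (norm w)\<^sup>2 + 2 * C * s\<^sup>2"
    using ineq unfolding s_def w_def \<gamma>_def by linarith
  have "lam * (norm w)\<^sup>2 \<ge> 0" "2 * C * s\<^sup>2 \<ge> 0" using lam C(2) by simp_all
  then have "2 * \<gamma> * s > 0" using main by linarith
  then have "s > 0" using \<gamma>(1) by (simp add: zero_less_mult_iff)
  have "(C * s) * s < \<gamma> * s" using main \<open>lam * (norm w)\<^sup>2 \<ge> 0\<close> by (simp add: power2_eq_square)
  then have "C * s < \<gamma>" using \<open>s > 0\<close> by simp
  then have s_le: "s \<le> \<gamma> / C" using C(2) by (simp add: field_simps)
  have s2: "s\<^sup>2 \<le> \<gamma>\<^sup>2 / C"
  proof -
    have "s\<^sup>2 \<le> (\<gamma> / C)\<^sup>2" using s_le \<open>s > 0\<close> by (intro power_mono) auto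
    also have "\<dots> \<le> \<gamma>\<^sup>2 / C"
      using C(2) mult_right_mono[of 1 C "\<gamma> * \<gamma>"] by (simp add: power_divide power2_eq_square field_simps)
    finally show ?thesis .
  qed
  have w2: "(norm w)\<^sup>2 \<le> 2 * \<gamma>\<^sup>2 / (lam * C)"
  proof -
    have "lam * (norm w)\<^sup>2 \<le> 2 * \<gamma> * (\<gamma> / C)"
      using main \<open>2 * C * s\<^sup>2 \<ge> 0\<close> mult_left_mono[OF s_le, of "2 * \<gamma>"] \<gamma>(1) by linarith
    then show ?thesis using lam C(2) by (simp add: field_simps power2_eq_square)
  qed
  have "(norm (x - q))\<^sup>2 \<le> \<gamma>\<^sup>2 / C + 2 * \<gamma>\<^sup>2 / (lam * C)"
    using dec(3) s2 w2 by linarith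
  also have "\<dots> = \<gamma>\<^sup>2 * (1 + 2 / lam) / C"
    using lam C(2) by (simp add: field_simps)
  also have "\<dots> \<le> (2 * gp)\<^sup>2 * (1 + 2 / lam) / C_inner"
    using \<gamma> lam C(3) r gp
    by (intro frac_le mult_right_mono power_mono) (auto simp: C_inner_def add_pos_pos)
  also have "\<dots> = r\<^sup>2"
  proof -
    define X where "X = 4 * gp\<^sup>2 * (1 + 2 / lam)"
    have "X > 0" using gp lam by (simp add: X_def add_pos_pos)
    moreover have "(2 * gp)\<^sup>2 * (1 + 2 / lam) = X" "C_inner = X / r\<^sup>2"
      by (simp_all add: X_def C_inner_def power_mult_distrib)
    ultimately show ?thesis by simp
  qed
  finally have "norm (x - q) \<le> r" using r(1) by (simp add: power2_le_iff_abs_le)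
  have "\<rho> x < 0"
    using rho_quadratic_bounds(1)[OF q \<open>norm (x - q) \<le> r\<close>] ineq mult_right_mono[OF C(1) zero_le_power2[of s]]
    unfolding s_def[symmetric] w_def[symmetric] \<gamma>_def[symmetric] add_divide_distrib mult.assoc
    by linarith
  moreover have "x \<in> U"
    using \<open>norm (x - q) \<le> r\<close> q(1) r r1 dist_triangle[of p x q] by (auto simp: dist_norm norm_minus_commute)
  ultimately show ?thesis using D_U by blast
qed


lemma depth_pos:
  assumes "q \<in> cball p r" "q \<in> closure D" "q \<notin> D" "x \<in> D"
  shows "depth q x > 0"
proof -
  have "g q \<bullet> (x - q) = - (norm (g q) * depth q x)"
    by (subst normal(2)[OF near_p(1)[OF assms(1)]]) (simp add: normal_height_def)
  then show ?thesis
    using gradient_separates[OF assms] near_p(3)[OF assms(1)] by (simp add: zero_less_mult_iff)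
qed

lemma outer_quadric_near:
  assumes q: "q \<in> cball p r" "q \<in> closure D" "q \<notin> D" and x: "x \<in> D" "norm (x - q) \<le> r"
  shows "tang q x \<bullet> H q (tang q x) - 3 * \<omega> * (norm (tang q x))\<^sup>2
    < 2 * norm (g q) * depth q x + 2 * C_taylor * (depth q x)\<^sup>2"
  using rho_quadratic_bounds(2)[OF q(1) rho_eq_0_boundary[OF q] x(2)] rho_neg_near[OF q(1) x(2,1)]
  unfolding diff_divide_distrib mult.assoc by linarith

definition kappa :: real where "kappa = (lam / 2) * r\<^sup>2 / (4 * gp + (2 * C_taylor + lam) * r)"

definition C_outer :: real where "C_outer = M * r\<^sup>2 / (2 * kappa\<^sup>2)"

lemma kappa_pos: "kappa > 0"
  using lam r gp C_taylor_pos by (simp add: kappa_def add_pos_pos)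

text \<open>Far from q, shrink x towards q to the point y at distance r, which stays in D by convexity:
  the near estimate at y bounds its depth from below by kappa, and depth scales linearly along
  the segment, so \<open>depth q x \<ge> kappa |x - q| / r\<close> dominates the quadratic form.\<close>
lemma outer_quadric:
  assumes q: "q \<in> cball p r" "q \<in> closure D" "q \<notin> D" and x: "x \<in> D"
    and C: "C \<ge> C_taylor" "C \<ge> C_outer"
  shows "tang q x \<bullet> H q (tang q x) - 3 * \<omega> * (norm (tang q x))\<^sup>2
    < 2 * norm (g q) * depth q x + 2 * C * (depth q x)\<^sup>2"
proof -
  define s w \<gamma> where "s = depth q x" and "w = tang q x" and "\<gamma> = norm (g q)"
  note nu = normal[OF near_p(1)[OF q(1)]]
  note dec = normal_decomposition[OF nu(1), where q=q and x=x, folded s_def w_def]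
  have "s > 0" using depth_pos[OF q x] by (simp add: s_def)
  have \<gamma>: "\<gamma> > 0" "\<gamma> \<le> 2 * gp" using near_p[OF q(1)] by (auto simp: \<gamma>_def)
  have "2 * C_taylor * s\<^sup>2 \<le> 2 * C * s\<^sup>2" using C(1) by (simp add: mult_right_mono)
  show ?thesis
  proof (cases "norm (x - q) \<le> r")
    case True
    then show ?thesis
      using outer_quadric_near[OF q x True] \<open>2 * C_taylor * s\<^sup>2 \<le> 2 * C * s\<^sup>2\<close>
      unfolding s_def w_def by linarith
  next
    case False
    define t where "t = r / norm (x - q)"
    have "norm (x - q) > r" using False by simp
    then have t: "0 < t" "t < 1" using r(1) by (auto simp: t_def divide_less_eq zero_less_divide_iff)
    define y where "y = q + t *\<^sub>R (x - q)"
    have "y \<in> D"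
      using mem_interior_closure_convex_shrink[OF convex_D _ q(2) t(1), of x] x t open_D
      by (simp add: interior_open y_def algebra_simps)
    have ny: "norm (y - q) = r" using \<open>norm (x - q) > r\<close> r by (auto simp: y_def t_def)
    have hy: "depth q y = t * s" "tang q y = t *\<^sub>R w"
      by (simp_all add: y_def s_def w_def normal_height_def tangential_part_def algebra_simps)
    have "depth q y > 0" using depth_pos[OF q \<open>y \<in> D\<close>] .
    have "g q \<bullet> tang q y = 0"
      using normal_decomposition(2)[OF nu(1), where q=q and x=y]
      by (subst nu(2)) (simp add: inner_commute[of "normal q"])
    then have "lam * (norm (tang q y))\<^sup>2 \<le> tang q y \<bullet> H q (tang q y)"
      using H_coercive[OF near_p(2)[OF q(1)]] by blast
    moreover have "(norm (tang q y))\<^sup>2 = r\<^sup>2 - (depth q y)\<^sup>2"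
      using normal_decomposition(3)[OF nu(1), where q=q and x=y] ny by simp
    moreover have "depth q y \<le> r"
    proof -
      have "(depth q y)\<^sup>2 \<le> r\<^sup>2"
        using \<open>(norm (tang q y))\<^sup>2 = r\<^sup>2 - (depth q y)\<^sup>2\<close> zero_le_power2[of "norm (tang q y)"] by linarith
      then show ?thesis using r(1) by (simp add: power2_le_iff_abs_le abs_le_iff)
    qed
    moreover have "3 * \<omega> * (norm (tang q y))\<^sup>2 \<le> lam / 2 * (norm (tang q y))\<^sup>2"
      using \<omega> by (intro mult_right_mono) auto
    moreover have "lam / 2 * (norm (tang q y))\<^sup>2 = lam / 2 * r\<^sup>2 - lam / 2 * (depth q y)\<^sup>2"
      by (subst \<open>(norm (tang q y))\<^sup>2 = r\<^sup>2 - (depth q y)\<^sup>2\<close>) (simp add: right_diff_distrib)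
    moreover have "lam * (norm (tang q y))\<^sup>2 = 2 * (lam / 2 * (norm (tang q y))\<^sup>2)"
      "(2 * C_taylor + lam / 2) * (depth q y)\<^sup>2 = 2 * (C_taylor * (depth q y)\<^sup>2) + lam / 2 * (depth q y)\<^sup>2"
      by (simp_all add: algebra_simps)
    ultimately have "lam / 2 * r\<^sup>2 < 2 * \<gamma> * depth q y + (2 * C_taylor + lam / 2) * (depth q y)\<^sup>2"
      using outer_quadric_near[OF q \<open>y \<in> D\<close>] ny unfolding \<gamma>_def mult.assoc by linarith
    also have "\<dots> \<le> depth q y * (4 * gp + (2 * C_taylor + lam) * r)"
    proof -
      have "(2 * C_taylor + lam / 2) * (depth q y)\<^sup>2 \<le> ((2 * C_taylor + lam) * r) * depth q y"
        using \<open>depth q y \<le> r\<close> \<open>depth q y > 0\<close> C_taylor_pos lam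
        by (simp add: power2_eq_square mult.assoc[symmetric] mult_right_mono mult_mono)
      moreover have "2 * \<gamma> * depth q y \<le> 4 * gp * depth q y"
        using \<gamma> \<open>depth q y > 0\<close> by (intro mult_right_mono) auto
      ultimately show ?thesis by (simp add: algebra_simps)
    qed
    finally have "kappa < depth q y"
      unfolding kappa_def using gp C_taylor_pos lam r by (simp add: field_simps add_pos_pos)
    then have "kappa < r * s / norm (x - q)" using hy(1) by (simp add: t_def)
    then have "kappa * norm (x - q) < r * s"
      using pos_less_divide_eq[of "norm (x - q)" kappa "r * s"] \<open>norm (x - q) > r\<close> r(1) by force
    then have "kappa * norm (x - q) / r \<le> s"
      using r(1) by (simp add: pos_divide_le_eq mult.commute)
    then have "(kappa * norm (x - q) / r)\<^sup>2 \<le> s\<^sup>2"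
      using kappa_pos r(1) by (intro power_mono) auto
    then have "2 * C_outer * (kappa * norm (x - q) / r)\<^sup>2 \<le> 2 * C_outer * s\<^sup>2"
      using M by (intro mult_left_mono) (auto simp: C_outer_def)
    moreover have "2 * C_outer * (kappa * norm (x - q) / r)\<^sup>2 = M * (norm (x - q))\<^sup>2"
      using kappa_pos r(1) by (simp add: C_outer_def power_mult_distrib power_divide)
    moreover have "w \<bullet> H q w \<le> M * (norm w)\<^sup>2"
      using inner_blinfun_le[of w "H q" w] near_p(5)[OF q(1)]
        mult_right_mono[of "norm (H q)" M "norm w * norm w"]
      by (simp add: power2_eq_square mult.assoc)
    moreover have "M * (norm w)\<^sup>2 \<le> M * (norm (x - q))\<^sup>2"
      using dec(3) M by (intro mult_left_mono) auto
    moreover have "3 * \<omega> * (norm w)\<^sup>2 \<ge> 0" "\<gamma> * s > 0" using \<omega>(1) \<gamma>(1) \<open>s > 0\<close> by simp_all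
    moreover have "2 * C_outer * s\<^sup>2 \<le> 2 * C * s\<^sup>2" using C(2) by (simp add: mult_right_mono)
    ultimately show ?thesis unfolding s_def w_def \<gamma>_def mult.assoc by linarith
  qed
qed

end

context taylor_ball
begin

lemma on_inner_normal:
  assumes q: "q \<in> cball p r" "q \<in> closure D" "q \<notin> D"
    and d: "dist z q = d" "d > 0" "ball z d \<subseteq> D"
  shows "z = q + d *\<^sub>R normal q"
proof -
  note nu = normal[OF near_p(1)[OF q(1)]]
  have "\<tau> \<le> depth q z" if "0 < \<tau>" "\<tau> < d" for \<tau>
  proof -
    have "z - \<tau> *\<^sub>R normal q \<in> D"
      using d(3) that nu(1) by (auto simp: dist_norm)
    then have "depth q (z - \<tau> *\<^sub>R normal q) > 0" by (rule depth_pos[OF q])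
    then show ?thesis
      using nu(1) by (simp add: normal_height_def inner_diff_right algebra_simps norm_eq_1)
  qed
  then have "d \<le> depth q z" using dense_le_bounded[OF d(2)] by blast
  moreover have "depth q z \<le> norm (normal q) * norm (z - q)"
    unfolding normal_height_def by (rule norm_cauchy_schwarz)
  ultimately have "normal q \<bullet> (z - q) = norm (normal q) * norm (z - q)"
    using d(1) nu(1) by (simp add: normal_height_def dist_norm)
  then have "norm (normal q) *\<^sub>R (z - q) = norm (z - q) *\<^sub>R normal q"
    by (simp only: norm_cauchy_schwarz_eq)
  then have "z - q = d *\<^sub>R normal q"
    using d(1) nu(1) by (simp add: dist_norm)
  then show ?thesis by (simp add: algebra_simps)
qed


lemma squeeze_radius_at_normal_point:
  assumes q: "q \<in> cball p r" "q \<in> closure D" "q \<notin> D" and "d > 0"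
    and th: "0 \<le> th" "th \<le> 1" "9 * \<omega> \<le> th * lam"
    and C: "C \<ge> C_taylor" "C \<ge> 1" "C \<ge> C_inner" "C \<ge> C_outer"
  defines "eps \<equiv> C * d / norm (g q)"
  assumes \<sigma>: "0 < \<sigma>" "\<sigma> * (1 + 2 * eps) \<le> 1" "(1 + th) * (1 + eps) * \<sigma>\<^sup>2 \<le> 1 - 8 * eps"
  shows "\<sigma> \<in> squeeze_radii D (q + d *\<^sub>R normal q)"
proof -
  define \<gamma> where "\<gamma> = norm (g q)"
  have "\<gamma> > 0" using near_p(3)[OF q(1)] by (simp add: \<gamma>_def)
  note nu = normal[OF near_p(1)[OF q(1)], folded \<gamma>_def]
  have g_tangent: "g q \<bullet> w = 0" if "w \<bullet> normal q = 0" for w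
    using that by (subst nu(2)) (simp add: inner_commute)
  have coercive: "w \<bullet> H q w \<ge> lam * (norm w)\<^sup>2" if "w \<bullet> normal q = 0" for w
    using H_coercive[OF near_p(2)[OF q(1)] g_tangent[OF that]] .
  \<comment> \<open>R normalizes the quadratic part of the Taylor bounds on the tangent hyperplane at q\<close>
  define A where "A w = (1 / (2 * \<gamma>)) *\<^sub>R (H q w - (3 * \<omega>) *\<^sub>R w)" for w
  have "linear A"
    unfolding A_def by (intro linearI) (simp_all add: blinfun.add_right blinfun.scaleR_right algebra_simps)
  have A_form: "w \<bullet> A w = (w \<bullet> H q w - 3 * \<omega> * (norm w)\<^sup>2) / (2 * \<gamma>)" for w
    by (simp add: A_def inner_diff_right power2_norm_eq_inner)
  have "w \<bullet> A w > 0" if "w \<noteq> 0" "w \<bullet> normal q = 0" for w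
  proof -
    have "3 * \<omega> * (norm w)\<^sup>2 < lam * (norm w)\<^sup>2" using \<omega> lam that(1) by simp
    then show ?thesis using coercive[OF that(2)] \<open>\<gamma> > 0\<close> by (simp add: A_form)
  qed
  then obtain R :: "'a \<Rightarrow> 'a" where R: "linear R" "inj R" "norm (R (normal q)) = 1"
    "\<And>w. w \<bullet> normal q = 0 \<Longrightarrow> R w \<bullet> R (normal q) = 0"
    "\<And>w. w \<bullet> normal q = 0 \<Longrightarrow> (norm (R w))\<^sup>2 = w \<bullet> A w"
    using hyperplane_form_factor[OF nu(1) \<open>linear A\<close>] by blast
  have "eps \<ge> 0" using C(2) \<open>d > 0\<close> \<open>\<gamma> > 0\<close> by (simp add: eps_def \<gamma>_def)
  interpret frame: quadric_frame q "normal q" R d eps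
    using nu(1) R \<open>d > 0\<close> \<open>eps \<ge> 0\<close> by (simp add: quadric_frame_def)
  have eps_d: "eps / d = C / \<gamma>" using \<open>d > 0\<close> by (simp add: eps_def \<gamma>_def)
  show ?thesis
  proof (rule frame.squeeze_radius_between_quadrics[OF th(1) \<sigma>])
    fix x assume "x \<in> D"
    define s w where "s = depth q x" and "w = tang q x"
    have "w \<bullet> normal q = 0" using normal_decomposition(2)[OF nu(1)] by (simp add: w_def)
    have "(norm (R w))\<^sup>2 = (w \<bullet> H q w - 3 * \<omega> * (norm w)\<^sup>2) / (2 * \<gamma>)"
      using R(5)[OF \<open>w \<bullet> normal q = 0\<close>] by (simp add: A_form)
    also have "\<dots> < (2 * \<gamma> * s + 2 * C * s\<^sup>2) / (2 * \<gamma>)"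
      using outer_quadric[OF q \<open>x \<in> D\<close> C(1,4)] \<open>\<gamma> > 0\<close>
      by (intro divide_strict_right_mono) (simp_all add: s_def w_def \<gamma>_def)
    also have "\<dots> = s + (eps / d) * s\<^sup>2"
      using \<open>\<gamma> > 0\<close> by (simp add: eps_d field_simps)
    finally show "depth q x > 0 \<and> (norm (R (tang q x)))\<^sup>2 < depth q x + (eps / d) * (depth q x)\<^sup>2"
      using depth_pos[OF q \<open>x \<in> D\<close>] by (simp add: s_def w_def)
  next
    fix x
    define s w where "s = depth q x" and "w = tang q x"
    assume "depth q x > (1 + th) * (norm (R (tang q x)))\<^sup>2 + (eps / d) * (depth q x)\<^sup>2"
    then have hyp: "s > (1 + th) * ((w \<bullet> H q w - 3 * \<omega> * (norm w)\<^sup>2) / (2 * \<gamma>)) + (C / \<gamma>) * s\<^sup>2"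
      using R(5)[of w] normal_decomposition(2)[OF nu(1)] by (simp add: s_def w_def eps_d A_form)
    show "x \<in> D"
    proof (rule inner_quadric_in_D[OF q(1) rho_eq_0_boundary[OF q] C(1-3)])
      define W where "W = 3 * \<omega> * (norm w)\<^sup>2"
      have "w \<bullet> H q w \<ge> lam * (norm w)\<^sup>2"
        using coercive normal_decomposition(2)[OF nu(1)] by (simp add: w_def)
      \<comment> \<open>the margin th absorbs the error terms of the Taylor bounds, since 9 \<omega> \<le> th lam\<close>
      then have "th * (w \<bullet> H q w) \<ge> th * (lam * (norm w)\<^sup>2)"
        using th(1) by (rule mult_left_mono)
      moreover have "th * lam * (norm w)\<^sup>2 \<ge> 9 * \<omega> * (norm w)\<^sup>2"
        using mult_right_mono[OF th(3) zero_le_power2] .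
      moreover have "(2 + th) * W \<le> 3 * W"
        using th(2) \<omega>(1) by (intro mult_right_mono) (auto simp: W_def)
      moreover have "3 * W = 9 * \<omega> * (norm w)\<^sup>2" by (simp add: W_def)
      moreover have "2 * \<gamma> * s > (1 + th) * (w \<bullet> H q w - W) + 2 * C * s\<^sup>2"
        using hyp \<open>\<gamma> > 0\<close> by (simp add: W_def field_simps)
      moreover have "(1 + th) * (w \<bullet> H q w - W) = w \<bullet> H q w - W + th * (w \<bullet> H q w) - th * W"
        "(2 + th) * W = 2 * W + th * W"
        by (simp_all add: algebra_simps)
      ultimately show "2 * norm (g q) * depth q x > tang q x \<bullet> H q (tang q x)
          + 3 * \<omega> * (norm (tang q x))\<^sup>2 + 2 * C * (depth q x)\<^sup>2"
        unfolding s_def[symmetric] w_def[symmetric] \<gamma>_def[symmetric] W_def[symmetric] mult.assoc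
        by linarith
    qed
  qed
qed


lemma squeeze_radius_near_p:
  assumes z: "z \<in> D" "dist z p \<le> r / 2"
    and th: "0 \<le> th" "th \<le> 1" "9 * \<omega> \<le> th * lam"
    and C: "C \<ge> C_taylor" "C \<ge> 1" "C \<ge> C_inner" "C \<ge> C_outer"
    and \<sigma>: "0 < \<sigma>" "\<And>eps. 0 \<le> eps \<Longrightarrow> eps \<le> 2 * C * dist z p / gp \<Longrightarrow>
      \<sigma> * (1 + 2 * eps) \<le> 1 \<and> (1 + th) * (1 + eps) * \<sigma>\<^sup>2 \<le> 1 - 8 * eps"
  shows "\<sigma> \<in> squeeze_radii D z"
proof -
  obtain q where q: "q \<notin> D" "q \<in> closure D" "dist z q > 0" "dist z q \<le> dist z p"
    "ball z (dist z q) \<subseteq> D"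
    using nearest_frontier_point[OF open_D z(1) p_not_in_D] .
  have "q \<in> cball p r"
    using dist_triangle[of p q z] q(4) z(2) by (simp add: dist_commute)
  then have z_normal: "z = q + dist z q *\<^sub>R normal q"
    using on_inner_normal q by blast
  define eps where "eps = C * dist z q / norm (g q)"
  have g: "gp / 2 \<le> norm (g q)" "g q \<noteq> 0"
    using g_bounds near_p[OF \<open>q \<in> cball p r\<close>] by auto
  have "0 \<le> eps" using C(2) by (simp add: eps_def)
  moreover have "eps \<le> 2 * C * dist z p / gp"
  proof -
    have "eps \<le> C * dist z p / norm (g q)"
      using q(4) C(2) by (simp add: eps_def divide_right_mono)
    also have "\<dots> \<le> C * dist z p / (gp / 2)"
      using g gp C(2) by (intro divide_left_mono) auto
    finally show ?thesis by (simp add: mult.commute mult.left_commute)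
  qed
  ultimately have "\<sigma> * (1 + 2 * eps) \<le> 1" "(1 + th) * (1 + eps) * \<sigma>\<^sup>2 \<le> 1 - 8 * eps"
    using \<sigma>(2) by auto
  then have "\<sigma> \<in> squeeze_radii D (q + dist z q *\<^sub>R normal q)"
    using squeeze_radius_at_normal_point[OF \<open>q \<in> cball p r\<close> q(2,1,3) th C \<sigma>(1)]
    unfolding eps_def by blast
  then show ?thesis using z_normal by simp
qed

end

lemma squeeze_margins:
  fixes \<eta> e :: real
  assumes "0 < \<eta>" "\<eta> \<le> 1 / 2" "0 \<le> e" "e \<le> \<eta> / 40"
  shows "(1 - \<eta>) * (1 + 2 * e) \<le> 1" "(1 + \<eta> / 4) * (1 + e) * (1 - \<eta>)\<^sup>2 \<le> 1 - 8 * e"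
proof -
  have "0 \<le> 2 * e * \<eta>" "2 * e \<le> \<eta>" using assms by simp_all
  then show "(1 - \<eta>) * (1 + 2 * e) \<le> 1" by (simp add: algebra_simps)
  have "(1 - \<eta>)\<^sup>2 \<le> 1 - \<eta>"
    using assms mult_left_mono[of "1 - \<eta>" 1 "1 - \<eta>"] by (simp add: power2_eq_square)
  moreover have "(1 + \<eta> / 4) * (1 + e) \<le> 1 + 3 / 10 * \<eta>"
  proof -
    have "\<eta> * e \<le> \<eta> * (\<eta> / 40)"
      using assms by (intro mult_left_mono) auto
    also have "\<dots> \<le> \<eta> * (1 / 80)"
      using assms by (intro mult_left_mono) auto
    finally have "\<eta> * e \<le> \<eta> / 80" by simp
    moreover have "(1 + \<eta> / 4) * (1 + e) = 1 + e + \<eta> / 4 + \<eta> * e / 4"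
      by (simp add: algebra_simps)
    ultimately show ?thesis using assms by linarith
  qed
  ultimately have "(1 + \<eta> / 4) * (1 + e) * (1 - \<eta>)\<^sup>2 \<le> (1 + 3 / 10 * \<eta>) * (1 - \<eta>)"
    using assms by (intro mult_mono) auto
  also have "\<dots> = 1 - 7 / 10 * \<eta> - 3 / 10 * (\<eta> * \<eta>)"
    by (simp add: field_simps)
  also have "\<dots> \<le> 1 - 8 * e"
    using assms mult_nonneg_nonneg[of \<eta> \<eta>] by linarith
  finally show "(1 + \<eta> / 4) * (1 + e) * (1 - \<eta>)\<^sup>2 \<le> 1 - 8 * e" .
qed

context strictly_convex_chart
begin

lemma eventually_squeeze_radius:
  assumes \<eta>: "0 < \<eta>" "\<eta> \<le> 1 / 2"
  shows "eventually (\<lambda>z. 1 - \<eta> \<in> squeeze_radii D z) (at p within D)"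
proof -
  obtain lam M gp r1 where "uniform_chart D p U \<rho> g H lam M gp r1"
    by (rule uniform_chart_exists)
  then interpret uniform_chart D p U \<rho> g H lam M gp r1 .
  define \<omega> where "\<omega> = \<eta> / 4 * lam / 9"
  have \<omega>_bounds: "\<omega> > 0" "\<omega> \<le> lam / 9" "9 * \<omega> \<le> \<eta> / 4 * lam"
    using \<eta> lam by (auto simp: \<omega>_def)
  have "isCont H p" using H_cont open_U p_U continuous_on_eq_continuous_at by blast
  then obtain d1 where d1: "d1 > 0" "\<And>x. dist x p < d1 \<Longrightarrow> dist (H x) (H p) < \<omega> / 2"
    using \<omega>_bounds(1) unfolding continuous_at_eps_delta by (meson half_gt_zero)
  define r where "r = min (r1 / 2) (d1 / 4)"
  have r: "r > 0" "2 * r \<le> r1" using r1 d1 by (auto simp: r_def)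
  have "norm (H x - H p) \<le> \<omega> / 2" if "x \<in> cball p (2 * r)" for x
  proof -
    have "dist x p < d1" using that d1(1) by (auto simp: r_def dist_commute)
    then have "dist (H x) (H p) < \<omega> / 2" by (rule d1(2))
    then show ?thesis by (simp add: dist_norm)
  qed
  then interpret taylor_ball D p U \<rho> g H lam M gp r1 \<omega> r
    using \<omega>_bounds r by unfold_locales auto
  define C where "C = max (max C_taylor 1) (max C_inner C_outer)"
  have C: "C \<ge> C_taylor" "C \<ge> 1" "C \<ge> C_inner" "C \<ge> C_outer" by (auto simp: C_def)
  define \<delta> where "\<delta> = min (r / 2) (\<eta> * gp / (80 * C))"
  have "\<delta> > 0" using r \<eta> gp C(2) by (simp add: \<delta>_def)
  moreover have "1 - \<eta> \<in> squeeze_radii D z" if "z \<in> D" "dist z p < \<delta>" for z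
  proof (rule squeeze_radius_near_p[OF that(1) _ _ _ _ C])
    show "dist z p \<le> r / 2" using that(2) by (simp add: \<delta>_def)
    show "0 \<le> \<eta> / 4" "\<eta> / 4 \<le> 1" "0 < 1 - \<eta>" using \<eta> by auto
    show "9 * \<omega> \<le> \<eta> / 4 * lam" by (fact \<omega>_bounds(3))
    fix eps assume eps: "0 \<le> eps" "eps \<le> 2 * C * dist z p / gp"
    have "2 * C * dist z p / gp \<le> 2 * C * \<delta> / gp"
      using that(2) C(2) gp by (intro divide_right_mono mult_left_mono) auto
    also have "\<dots> \<le> 2 * C * (\<eta> * gp / (80 * C)) / gp"
      using C(2) gp by (intro divide_right_mono mult_left_mono) (auto simp: \<delta>_def)
    also have "\<dots> = \<eta> / 40"
      using C(2) gp by (simp add: field_simps)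
    finally show "(1 - \<eta>) * (1 + 2 * eps) \<le> 1 \<and> (1 + \<eta> / 4) * (1 + eps) * (1 - \<eta>)\<^sup>2 \<le> 1 - 8 * eps"
      using squeeze_margins[OF \<eta> eps(1)] eps(2) by simp
  qed
  ultimately show ?thesis
    unfolding eventually_at by blast
qed

end

lemma squeeze_radii_le_1:
  fixes D :: "'a::euclidean_space set"
  assumes "\<sigma> \<in> squeeze_radii D z"
  shows "\<sigma> \<le> 1"
proof (rule ccontr)
  assume "\<not> \<sigma> \<le> 1"
  obtain f where f: "ball 0 \<sigma> \<subseteq> proj_map f ` D" "proj_map f ` D \<subseteq> ball 0 1"
    using assms unfolding squeeze_radii_def by blast
  obtain u :: 'a where "norm u = 1" using vector_choose_size[of 1] by auto
  then have "((1 + \<sigma>) / 2) *\<^sub>R u \<in> ball 0 \<sigma> - ball 0 1"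
    using \<open>\<not> \<sigma> \<le> 1\<close> by auto
  then show False using f by blast
qed

lemma squeezing_bounds:
  fixes D :: "'a::euclidean_space set"
  assumes "\<sigma> \<in> squeeze_radii D z"
  shows "\<sigma> \<le> squeezing D z" "squeezing D z \<le> 1"
proof -
  have "squeeze_radii D z \<noteq> {}" using assms by blast
  moreover have "bdd_above (squeeze_radii D z)"
    using squeeze_radii_le_1 by (intro bdd_aboveI) blast
  ultimately show "\<sigma> \<le> squeezing D z" "squeezing D z \<le> 1"
    using assms squeeze_radii_le_1 by (auto simp: squeezing_def intro!: cSup_upper cSup_least)
qed

lemma tendsto_squeezing_1:
  fixes D :: "'a::euclidean_space set"
  assumes "\<And>\<eta>. 0 < \<eta> \<Longrightarrow> \<eta> \<le> 1 / 2 \<Longrightarrow> eventually (\<lambda>z. 1 - \<eta> \<in> squeeze_radii D z) F"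
  shows "(squeezing D \<longlongrightarrow> 1) F"
proof (rule tendstoI)
  fix e :: real assume "e > 0"
  define \<eta> where "\<eta> = min (e / 2) (1 / 2)"
  have \<eta>: "0 < \<eta>" "\<eta> \<le> 1 / 2" "\<eta> < e" using \<open>e > 0\<close> by (auto simp: \<eta>_def)
  show "eventually (\<lambda>z. dist (squeezing D z) 1 < e) F"
    using assms[OF \<eta>(1,2)]
  proof (rule eventually_mono)
    fix z assume "1 - \<eta> \<in> squeeze_radii D z"
    then show "dist (squeezing D z) 1 < e"
      using squeezing_bounds[of "1 - \<eta>" D z] \<eta>(3) by (simp add: dist_real_def)
  qed
qed

theorem theorem2:
  fixes D :: "'a::euclidean_space set" and p :: 'a
  assumes "open D" and "connected D" and "D \<noteq> {}" and "convex D"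
    and "p \<in> frontier D"
    and "strictly_convex_point D p"
  shows "(squeezing D \<longlongrightarrow> 1) (at p within D)"
proof -
  obtain U \<rho> g H where "strictly_convex_chart D p U \<rho> g H"
    using assms(6) unfolding strictly_convex_point_def
    by (elim exE conjE) (use assms(1,4,5) in \<open>blast intro: strictly_convex_chart.intro\<close>)
  then show ?thesis
    by (intro tendsto_squeezing_1 strictly_convex_chart.eventually_squeeze_radius)
qed

end
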